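(* Let $n\in\{1,\dots,5\}$. Every homogeneous invariant $F\in K[X_n]^{G_n}$ of degree $d$ is an invariant of weight $k$, where $d=k$ if $n=1,2,3$, $d=2k$ if $n=4$, and $d=5k$ if $n=5$. In particular $K[X_n]^{G_n}=\bigoplus_{k\ge0}K[X_n]^{G_n}_k$, where $K[X_n]^{G_n}_k$ is the space of invariants of weight $k$.
   Context: Let $K$ be a perfect field with algebraic closure $\overline K$. Genus one models and groups: (n=1) $\phi=(a_1,a_2,a_3,a_4,a_6)$, model $y^2+a_1xy+a_3y=x^3+a_2x^2+a_4x+a_6$; $\mathcal G_1$ consists of $[u;r,s,t]$, $u\ne0$, acting by substituting $x=u^2x'+r$, $y=u^3y'+u^2sx'+t$ and dividing by $u^6$; $\det[u;r,s,t]=u^{-1}$. (n=2) $\phi=(p,q)$, $p=\alpha_0x^2+\alpha_1xz+\alpha_2z^2$, $q=ax^4+bx^3z+cx^2z^2+dxz^3+ez^4$, model $y^2+p(x,z)y=q(x,z)$; $\mathcal G_2$ consists of $[\mu,r,B]$, acting by substituting $x=B_{11}x'+B_{21}z'$, $z=B_{12}x'+B_{22}z'$, $y=\mu^{-1}y'+r_0x'^2+r_1x'z'+r_2z'^2$ and multiplying by $\mu^2$; $\det=\mu\det B$. (n=3) ternary cubic $f$; $\mathcal G_3=\mathbb G_m\times\mathrm{GL}_3$, $[\mu,B]f=\mu f$ after substituting $x_j=\sum_iB_{ij}x_i'$; $\det=\mu\det B$. (n=4) pair of quadratic forms $\phi=(q_1,q_2)^T$ in 4 variables; $\mathcal G_4=\mathrm{GL}_2\times\mathrm{GL}_4$,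 $[A,B]$: $\phi\mapsto A\phi$ with $x_j=\sum_iB_{ij}x_i'$; $\det=\det A\det B$. (n=5) $5\times5$ alternating matrix $\phi$ of linear forms in 5 variables; $\mathcal G_5=\mathrm{GL}_5\times\mathrm{GL}_5$, $[A,B]$: $\phi\mapsto A\phi A^T$ with $x_j=\sum_iB_{ij}x_i'$; $\det=(\det A)^2\det B$. $G_n$ is the commutator subgroup: $G_1=\{[1;r,s,t]\}$, $G_2=\{[1,r,B]:B\in\mathrm{SL}_2\}$, $G_3=\mathrm{SL}_3$, $G_4=\mathrm{SL}_2\times\mathrm{SL}_4$, $G_5=\mathrm{SL}_5\times\mathrm{SL}_5$. $K[X_n]$ is the polynomial ring in the coefficients, graded by $\deg a_i=i$ ($n=1$), $\deg\alpha_i=1$, $\deg a=\dots=\deg e=2$ ($n=2$), and usual degree for $n=3,4,5$. $K[X_n]^{G_n}=\{F:F\circ g=F\ \forall g\in G_n(\overline K)\}$; $F$ is an invariant of weight $k$ if $F\circ g=(\det g)^kF$ for all $g\in\mathcal G_n(\overline K)$. *)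

theory Defs
  imports "HOL-Library.Poly_Mapping" "HOL-Computational_Algebra.Polynomial"
          "Jordan_Normal_Form.Determinant"
begin

text \<open>The ambient field type 'a plays the role of the algebraic closure of K;
  K is a subfield of 'a over which every element of 'a is algebraic.\<close>

definition alg_closed_field_type :: "'a::field itself \<Rightarrow> bool" where
  "alg_closed_field_type _ \<longleftrightarrow>
     (\<forall>p :: 'a poly. degree p \<ge> 1 \<longrightarrow> (\<exists>x. poly p x = 0))"

definition subfield :: "'a::field set \<Rightarrow> bool" where
  "subfield K \<longleftrightarrow> 0 \<in> K \<and> 1 \<in> K \<and>
     (\<forall>x\<in>K. \<forall>y\<in>K. x + y \<in> K \<and> x - y \<in> K \<and> x * y \<in> K) \<and>
     (\<forall>x\<in>K. x \<noteq> 0 \<longrightarrow> inverse x \<in> K)"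

definition is_algebraic_closure_of :: "'a::field set \<Rightarrow> bool" where
  "is_algebraic_closure_of K \<longleftrightarrow> subfield K \<and> alg_closed_field_type TYPE('a) \<and>
     (\<forall>x::'a. \<exists>p. p \<noteq> 0 \<and> (\<forall>i. coeff p i \<in> K) \<and> poly p x = 0)"

definition perfect_field :: "'a::field set \<Rightarrow> bool" where
  "perfect_field K \<longleftrightarrow> CHAR('a) = 0 \<or> (\<forall>x\<in>K. \<exists>y\<in>K. y ^ CHAR('a) = x)"

type_synonym 'a mpoly = "(nat \<Rightarrow>\<^sub>0 nat) \<Rightarrow>\<^sub>0 'a"

definition Var :: "nat \<Rightarrow> 'a::comm_semiring_1 mpoly" where
  "Var i = Poly_Mapping.single (Poly_Mapping.single i 1) 1"

definition Const :: "'a::comm_semiring_1 \<Rightarrow> 'a mpoly" where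
  "Const c = Poly_Mapping.single 0 c"

definition Mon :: "(nat \<Rightarrow>\<^sub>0 nat) \<Rightarrow> 'a::comm_semiring_1 mpoly" where
  "Mon m = Poly_Mapping.single m 1"

definition mon :: "nat list \<Rightarrow> (nat \<Rightarrow>\<^sub>0 nat)" where
  "mon es = (\<Sum>i<length es. Poly_Mapping.single i (es ! i))"

definition mpeval :: "(nat \<Rightarrow> 'a::comm_semiring_1) \<Rightarrow> 'a mpoly \<Rightarrow> 'a" where
  "mpeval x p = (\<Sum>m\<in>Poly_Mapping.keys p.
      Poly_Mapping.lookup p m * (\<Prod>i\<in>Poly_Mapping.keys m. x i ^ Poly_Mapping.lookup m i))"

definition msubst :: "(nat \<Rightarrow> 'a::comm_semiring_1 mpoly) \<Rightarrow> 'a mpoly \<Rightarrow> 'a mpoly" where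
  "msubst \<sigma> p = (\<Sum>m\<in>Poly_Mapping.keys p.
      Const (Poly_Mapping.lookup p m) * (\<Prod>i\<in>Poly_Mapping.keys m. \<sigma> i ^ Poly_Mapping.lookup m i))"

definition linsubst :: "nat \<Rightarrow> 'a::comm_ring_1 mat \<Rightarrow> nat \<Rightarrow> 'a mpoly" where
  "linsubst nv B j = (\<Sum>i<nv. Const (B $$ (i, j)) * Var i)"

text \<open>A group element is encoded uniformly as a triple (c, A, B) of a list of
  scalars and two matrices:
  n=1: c=[u,r,s,t], A and B are 0x0;
  n=2: c=[mu,r0,r1,r2], A is 0x0, B is 2x2;
  n=3: c=[mu], A is 0x0, B is 3x3;
  n=4: c=[], A is 2x2, B is 4x4;
  n=5: c=[], A is 5x5, B is 5x5.\<close>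

type_synonym 'a gelt = "'a list \<times> 'a mat \<times> 'a mat"

definition Gcal :: "nat \<Rightarrow> 'a::field gelt set" where
  "Gcal n = {(c, A, B).
     (n = 1 \<and> length c = 4 \<and> c ! 0 \<noteq> 0 \<and> A = zero_mat 0 0 \<and> B = zero_mat 0 0) \<or>
     (n = 2 \<and> length c = 4 \<and> c ! 0 \<noteq> 0 \<and> A = zero_mat 0 0 \<and> B \<in> carrier_mat 2 2 \<and> det B \<noteq> 0) \<or>
     (n = 3 \<and> length c = 1 \<and> c ! 0 \<noteq> 0 \<and> A = zero_mat 0 0 \<and> B \<in> carrier_mat 3 3 \<and> det B \<noteq> 0) \<or>
     (n = 4 \<and> c = [] \<and> A \<in> carrier_mat 2 2 \<and> det A \<noteq> 0 \<and> B \<in> carrier_mat 4 4 \<and> det B \<noteq> 0) \<or>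
     (n = 5 \<and> c = [] \<and> A \<in> carrier_mat 5 5 \<and> det A \<noteq> 0 \<and> B \<in> carrier_mat 5 5 \<and> det B \<noteq> 0)}"

definition Gcomm :: "nat \<Rightarrow> 'a::field gelt set" where
  "Gcomm n = {(c, A, B). (c, A, B) \<in> Gcal n \<and>
     (n = 1 \<longrightarrow> c ! 0 = 1) \<and>
     (n = 2 \<longrightarrow> c ! 0 = 1 \<and> det B = 1) \<and>
     (n = 3 \<longrightarrow> c ! 0 = 1 \<and> det B = 1) \<and>
     (n = 4 \<longrightarrow> det A = 1 \<and> det B = 1) \<and>
     (n = 5 \<longrightarrow> det A = 1 \<and> det B = 1)}"

text \<open>Note: for n=3 the group is G_m x GL_3 and its commutator subgroup SL_3
  is embedded as mu = 1.\<close>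

definition gdet :: "nat \<Rightarrow> 'a::field gelt \<Rightarrow> 'a" where
  "gdet n g = (case g of (c, A, B) \<Rightarrow>
     (if n = 1 then inverse (c ! 0)
      else if n = 2 \<or> n = 3 then c ! 0 * det B
      else if n = 4 then det A * det B
      else (det A)^2 * det B))"

definition Ndim :: "nat \<Rightarrow> nat" where
  "Ndim n = (if n = 1 then 5 else if n = 2 then 8 else if n = 3 then 10
             else if n = 4 then 20 else 50)"

text \<open>Grading weights of the coordinates.  n=1: (a1,a2,a3,a4,a6) at
  positions 0..4; n=2: (alpha0,alpha1,alpha2,a,b,c,d,e) at positions 0..7.\<close>
definition wt :: "nat \<Rightarrow> nat \<Rightarrow> nat" where
  "wt n i = (if n = 1 then [1,2,3,4,6] ! i
             else if n = 2 then (if i < 3 then 1 else 2) else 1)"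

definition wfac :: "nat \<Rightarrow> nat" where
  "wfac n = (if n = 4 then 2 else if n = 5 then 5 else 1)"

text \<open>Monomial lists for ternary cubics and quaternary quadrics; pair list
  for the upper triangle of a 5x5 alternating matrix.\<close>
definition mons3 :: "(nat \<Rightarrow>\<^sub>0 nat) list" where
  "mons3 = concat (map (\<lambda>i. map (\<lambda>j. mon [i, j, 3 - i - j]) [0..<4 - i]) [0..<4])"

definition mons4 :: "(nat \<Rightarrow>\<^sub>0 nat) list" where
  "mons4 = concat (map (\<lambda>i. map (\<lambda>j. Poly_Mapping.single i 1 + Poly_Mapping.single j 1) [i..<4]) [0..<4])"

definition pairs5 :: "(nat \<times> nat) list" where
  "pairs5 = concat (map (\<lambda>i. map (\<lambda>j. (i, j)) [Suc i..<5]) [0..<5])"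

definition weq1 :: "(nat \<Rightarrow> 'a::field) \<Rightarrow> 'a mpoly" where
  "weq1 \<phi> = Var 1 ^ 2 + Const (\<phi> 0) * Var 0 * Var 1 + Const (\<phi> 2) * Var 1
     - Var 0 ^ 3 - Const (\<phi> 1) * Var 0 ^ 2 - Const (\<phi> 3) * Var 0 - Const (\<phi> 4)"

definition act1 :: "'a::field gelt \<Rightarrow> (nat \<Rightarrow> 'a) \<Rightarrow> (nat \<Rightarrow> 'a)" where
  "act1 g \<phi> = (case g of (c, A, B) \<Rightarrow>
     let u = c ! 0; r = c ! 1; s = c ! 2; t = c ! 3;
         \<sigma> = (\<lambda>i. if i = 0 then Const (u^2) * Var 0 + Const r
                  else if i = 1 then Const (u^3) * Var 1 + Const (u^2 * s) * Var 0 + Const t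
                  else Var i);
         P = Const (inverse (u ^ 6)) * msubst \<sigma> (weq1 \<phi>)
     in (\<lambda>i. if i = 0 then Poly_Mapping.lookup P (mon [1,1])
             else if i = 1 then - Poly_Mapping.lookup P (mon [2,0])
             else if i = 2 then Poly_Mapping.lookup P (mon [0,1])
             else if i = 3 then - Poly_Mapping.lookup P (mon [1,0])
             else if i = 4 then - Poly_Mapping.lookup P (mon [0,0])
             else 0))"

(* n = 2: variables x = 0, z = 1, y = 2 *)
definition weq2 :: "(nat \<Rightarrow> 'a::field) \<Rightarrow> 'a mpoly" where
  "weq2 \<phi> = Var 2 ^ 2
     + (\<Sum>i<3. Const (\<phi> i) * Mon (mon [2 - i, i])) * Var 2
     - (\<Sum>j<5. Const (\<phi> (3 + j)) * Mon (mon [4 - j, j]))"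

definition act2 :: "'a::field gelt \<Rightarrow> (nat \<Rightarrow> 'a) \<Rightarrow> (nat \<Rightarrow> 'a)" where
  "act2 g \<phi> = (case g of (c, A, B) \<Rightarrow>
     let \<mu> = c ! 0;
         \<sigma> = (\<lambda>i. if i = 0 then Const (B $$ (0,0)) * Var 0 + Const (B $$ (1,0)) * Var 1
                  else if i = 1 then Const (B $$ (0,1)) * Var 0 + Const (B $$ (1,1)) * Var 1
                  else if i = 2 then Const (inverse \<mu>) * Var 2 + Const (c ! 1) * Var 0 ^ 2
                        + Const (c ! 2) * Var 0 * Var 1 + Const (c ! 3) * Var 1 ^ 2
                  else Var i);
         P = Const (\<mu> ^ 2) * msubst \<sigma> (weq2 \<phi>)
     in (\<lambda>i. if i < 3 then Poly_Mapping.lookup P (mon [2 - i, i, 1])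
             else if i < 8 then - Poly_Mapping.lookup P (mon [4 - (i - 3), i - 3, 0])
             else 0))"

definition cubic3 :: "(nat \<Rightarrow> 'a::field) \<Rightarrow> 'a mpoly" where
  "cubic3 \<phi> = (\<Sum>t<10. Const (\<phi> t) * Mon (mons3 ! t))"

definition act3 :: "'a::field gelt \<Rightarrow> (nat \<Rightarrow> 'a) \<Rightarrow> (nat \<Rightarrow> 'a)" where
  "act3 g \<phi> = (case g of (c, A, B) \<Rightarrow>
     let P = Const (c ! 0) * msubst (linsubst 3 B) (cubic3 \<phi>)
     in (\<lambda>t. if t < 10 then Poly_Mapping.lookup P (mons3 ! t) else 0))"

definition quad4 :: "(nat \<Rightarrow> 'a::field) \<Rightarrow> nat \<Rightarrow> 'a mpoly" where
  "quad4 \<phi> a = (\<Sum>t<10. Const (\<phi> (10 * a + t)) * Mon (mons4 ! t))"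

definition act4 :: "'a::field gelt \<Rightarrow> (nat \<Rightarrow> 'a) \<Rightarrow> (nat \<Rightarrow> 'a)" where
  "act4 g \<phi> = (case g of (c, A, B) \<Rightarrow>
     let Q = (\<lambda>a. \<Sum>b<2. Const (A $$ (a, b)) * msubst (linsubst 4 B) (quad4 \<phi> b))
     in (\<lambda>i. if i < 20 then Poly_Mapping.lookup (Q (i div 10)) (mons4 ! (i mod 10)) else 0))"

(* n = 5: entry (i,j), i<j, at pair index p = position of (i,j) in pairs5,
   has linear form sum_l phi(5p+l) x_l *)
definition alt5 :: "(nat \<Rightarrow> 'a::field) \<Rightarrow> nat \<Rightarrow> nat \<Rightarrow> 'a mpoly" where
  "alt5 \<phi> i j = (\<Sum>p<10. \<Sum>l<5.
      (if pairs5 ! p = (i, j) then Const (\<phi> (5 * p + l)) * Var l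
       else if pairs5 ! p = (j, i) then - Const (\<phi> (5 * p + l)) * Var l
       else 0))"

definition act5 :: "'a::field gelt \<Rightarrow> (nat \<Rightarrow> 'a) \<Rightarrow> (nat \<Rightarrow> 'a)" where
  "act5 g \<phi> = (case g of (c, A, B) \<Rightarrow>
     let M = (\<lambda>i j. \<Sum>k<5. \<Sum>l<5. Const (A $$ (i, k) * A $$ (j, l)) * alt5 \<phi> k l)
     in (\<lambda>t. if t < 50 then
               Poly_Mapping.lookup
                 (msubst (linsubst 5 B) (M (fst (pairs5 ! (t div 5))) (snd (pairs5 ! (t div 5)))))
                 (Poly_Mapping.single (t mod 5) 1)
             else 0))"

definition act :: "nat \<Rightarrow> 'a::field gelt \<Rightarrow> (nat \<Rightarrow> 'a) \<Rightarrow> (nat \<Rightarrow> 'a)" where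
  "act n = (if n = 1 then act1 else if n = 2 then act2 else if n = 3 then act3
            else if n = 4 then act4 else act5)"

definition KX :: "nat \<Rightarrow> 'a::field set \<Rightarrow> 'a mpoly set" where
  "KX n K = {F. (\<forall>m. Poly_Mapping.lookup F m \<in> K) \<and>
               (\<forall>m\<in>Poly_Mapping.keys F. \<forall>i\<in>Poly_Mapping.keys m. i < Ndim n)}"

definition homogeneous :: "nat \<Rightarrow> nat \<Rightarrow> 'a::field mpoly \<Rightarrow> bool" where
  "homogeneous n d F \<longleftrightarrow> (\<forall>m\<in>Poly_Mapping.keys F.
      (\<Sum>i\<in>Poly_Mapping.keys m. wt n i * Poly_Mapping.lookup m i) = d)"

text \<open>F o g = F for all g in G_n(Kbar) (as functions on Kbar^N; equivalent to
  equality of polynomials since Kbar is infinite).\<close>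
definition Gn_invariant :: "nat \<Rightarrow> 'a::field mpoly \<Rightarrow> bool" where
  "Gn_invariant n F \<longleftrightarrow> (\<forall>g\<in>Gcomm n. \<forall>\<phi>. mpeval (act n g \<phi>) F = mpeval \<phi> F)"

definition weight_invariant :: "nat \<Rightarrow> nat \<Rightarrow> 'a::field mpoly \<Rightarrow> bool" where
  "weight_invariant n k F \<longleftrightarrow>
     (\<forall>g\<in>Gcal n. \<forall>\<phi>. mpeval (act n g \<phi>) F = gdet n g ^ k * mpeval \<phi> F)"

end

theory Submission
  imports Defs
begin

(* Over the algebraically closed field every g in the full group factors as an element h of
   the commutator subgroup G_n followed by the weighted scaling phi_i -> e ^ wt i * phi_i, where
   e ^ wfac n = det g: extract a root of the determinant of each matrix (together with the scalar
   u or mu).  A homogeneous polynomial of weighted degree d picks up e ^ d under that scaling, so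
   a G_n-invariant of degree wfac n * k is an invariant of weight k.

   That wfac n divides d comes from diagonal tori in G_n.  For n = 4, A = diag(t, 1/t) forces
   every monomial to contain as many coefficients of q1 as of q2.  For n = 5, B = diag with t and
   1/t in two positions forces each variable x_l to occur equally often among the coefficients,
   so d = 5 * (number of occurrences of x_0).

   The scalings normalise G_n, so the homogeneous parts of an invariant are invariant; and the
   weight decomposition is unique because the functions t -> t ^ k are linearly independent on
   an infinite field. *)

definition monom_eval :: "(nat \<Rightarrow> 'a::comm_semiring_1) \<Rightarrow> (nat \<Rightarrow>\<^sub>0 nat) \<Rightarrow> 'a" where
  "monom_eval x m = (\<Prod>i\<in>Poly_Mapping.keys m. x i ^ Poly_Mapping.lookup m i)"

lemma monom_eval_superset:
  assumes "finite S" "Poly_Mapping.keys m \<subseteq> S"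
  shows "monom_eval x m = (\<Prod>i\<in>S. x i ^ Poly_Mapping.lookup m i)"
  unfolding monom_eval_def
  by (rule prod.mono_neutral_left) (use assms in \<open>auto simp: in_keys_iff\<close>)

lemma monom_eval_zero [simp]: "monom_eval x 0 = 1"
  by (simp add: monom_eval_def)

lemma monom_eval_single [simp]: "monom_eval x (Poly_Mapping.single i k) = x i ^ k"
  by (simp add: monom_eval_def)

lemma monom_eval_add: "monom_eval x (m + m') = monom_eval x m * monom_eval x m'"
proof -
  let ?S = "Poly_Mapping.keys m \<union> Poly_Mapping.keys m'"
  have "monom_eval x (m + m') = (\<Prod>i\<in>?S. x i ^ Poly_Mapping.lookup (m + m') i)"
    by (rule monom_eval_superset) (auto dest: set_mp[OF keys_add])
  also have "\<dots> = (\<Prod>i\<in>?S. x i ^ Poly_Mapping.lookup m i) * (\<Prod>i\<in>?S. x i ^ Poly_Mapping.lookup m' i)"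
    by (simp add: lookup_add power_add prod.distrib)
  also have "\<dots> = monom_eval x m * monom_eval x m'"
    by (subst (1 2) monom_eval_superset[of ?S]) auto
  finally show ?thesis .
qed

lemma monom_eval_mult: "monom_eval (\<lambda>i. a i * x i) m = monom_eval a m * monom_eval x m"
  by (simp add: monom_eval_def power_mult_distrib prod.distrib)

lemma monom_eval_cong:
  "(\<And>i. i \<in> Poly_Mapping.keys m \<Longrightarrow> x i = y i) \<Longrightarrow> monom_eval x m = monom_eval y m"
  unfolding monom_eval_def by (rule prod.cong) auto

lemma monom_eval_power_weights:
  "monom_eval (\<lambda>i. t ^ u i) m = t ^ (\<Sum>i\<in>Poly_Mapping.keys m. u i * Poly_Mapping.lookup m i)"
  by (simp add: monom_eval_def power_sum power_mult)

lemma mpeval_eq_sum: "mpeval x p = (\<Sum>m\<in>Poly_Mapping.keys p. Poly_Mapping.lookup p m * monom_eval x m)"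
  by (simp add: mpeval_def monom_eval_def)

lemma mpeval_superset:
  assumes "finite S" "Poly_Mapping.keys p \<subseteq> S"
  shows "mpeval x p = (\<Sum>m\<in>S. Poly_Mapping.lookup p m * monom_eval x m)"
  unfolding mpeval_eq_sum
  by (rule sum.mono_neutral_left) (use assms in \<open>auto simp: in_keys_iff\<close>)

lemma mpeval_cong:
  "(\<And>m i. m \<in> Poly_Mapping.keys p \<Longrightarrow> i \<in> Poly_Mapping.keys m \<Longrightarrow> x i = y i) \<Longrightarrow>
   mpeval x p = mpeval y p"
  unfolding mpeval_eq_sum by (intro sum.cong refl arg_cong2[where f = "(*)"] monom_eval_cong) auto

lemma mpeval_zero [simp]: "mpeval x 0 = 0"
  by (simp add: mpeval_def)

lemma mpeval_single [simp]: "mpeval x (Poly_Mapping.single m a) = a * monom_eval x m"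
  by (simp add: mpeval_eq_sum)

lemma mpeval_add [simp]: "mpeval x (p + q) = mpeval x p + mpeval x q"
proof -
  let ?S = "Poly_Mapping.keys p \<union> Poly_Mapping.keys q"
  have "mpeval x (p + q) = (\<Sum>m\<in>?S. Poly_Mapping.lookup (p + q) m * monom_eval x m)"
    by (rule mpeval_superset) (auto dest: set_mp[OF keys_add])
  also have "\<dots> = (\<Sum>m\<in>?S. Poly_Mapping.lookup p m * monom_eval x m) +
                  (\<Sum>m\<in>?S. Poly_Mapping.lookup q m * monom_eval x m)"
    by (simp add: lookup_add distrib_right sum.distrib)
  also have "\<dots> = mpeval x p + mpeval x q"
    by (subst (1 2) mpeval_superset[of ?S]) auto
  finally show ?thesis .
qed

lemma mpeval_uminus [simp]: "mpeval x (- p) = - mpeval x (p :: 'a::comm_ring_1 mpoly)"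
proof -
  have "mpeval x (- p) = (\<Sum>m\<in>Poly_Mapping.keys p. Poly_Mapping.lookup (- p) m * monom_eval x m)"
    by (rule mpeval_superset) (auto simp: in_keys_iff)
  then show ?thesis by (simp add: mpeval_eq_sum sum_negf)
qed

lemma mpeval_diff [simp]: "mpeval x (p - q) = mpeval x p - mpeval x (q :: 'a::comm_ring_1 mpoly)"
  using mpeval_add[of x p "- q"] by simp

lemma mpeval_sum: "mpeval x (\<Sum>i\<in>A. f i) = (\<Sum>i\<in>A. mpeval x (f i))"
  by (induction A rule: infinite_finite_induct) auto

lemma poly_mapping_sum_single:
  "p = (\<Sum>m\<in>Poly_Mapping.keys p. Poly_Mapping.single m (Poly_Mapping.lookup p m))"
  by (rule poly_mapping_eqI)
    (simp add: lookup_sum lookup_single when_def sum.delta in_keys_iff eq_commute[of _ "_ :: _ \<Rightarrow>\<^sub>0 _"])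

lemma mpeval_mult [simp]: "mpeval x (p * q) = mpeval x p * mpeval x (q :: 'a::comm_semiring_1 mpoly)"
proof -
  have "p * q = (\<Sum>a\<in>Poly_Mapping.keys p. Poly_Mapping.single a (Poly_Mapping.lookup p a)) *
                (\<Sum>b\<in>Poly_Mapping.keys q. Poly_Mapping.single b (Poly_Mapping.lookup q b))"
    by (subst (1) poly_mapping_sum_single, subst (2) poly_mapping_sum_single) (rule refl)
  also have "\<dots> = (\<Sum>a\<in>Poly_Mapping.keys p. \<Sum>b\<in>Poly_Mapping.keys q.
        Poly_Mapping.single (a + b) (Poly_Mapping.lookup p a * Poly_Mapping.lookup q b))"
    by (simp add: sum_product mult_single)
  finally have "mpeval x (p * q) = (\<Sum>a\<in>Poly_Mapping.keys p. \<Sum>b\<in>Poly_Mapping.keys q.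
      (Poly_Mapping.lookup p a * monom_eval x a) * (Poly_Mapping.lookup q b * monom_eval x b))"
    by (simp add: mpeval_sum monom_eval_add mult_ac)
  then show ?thesis by (simp add: mpeval_eq_sum sum_product)
qed

lemma mpeval_one [simp]: "mpeval x 1 = (1 :: 'a::comm_semiring_1)"
proof -
  have one: "(1 :: 'a mpoly) = Poly_Mapping.single 0 1"
    by (rule poly_mapping_eqI) (simp add: lookup_one lookup_single when_def)
  show ?thesis by (simp only: one mpeval_single monom_eval_zero mult_1)
qed

lemma mpeval_power [simp]: "mpeval x (p ^ k) = mpeval x (p :: 'a::comm_semiring_1 mpoly) ^ k"
  by (induction k) auto

lemma mpeval_prod: "mpeval x (\<Prod>i\<in>A. f i) = (\<Prod>i\<in>A. mpeval x (f i :: 'a::comm_semiring_1 mpoly))"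
  by (induction A rule: infinite_finite_induct) auto

lemma mpeval_Const [simp]: "mpeval x (Const c) = c"
  by (simp add: Const_def)

lemma mpeval_Var [simp]: "mpeval x (Var i) = x i"
  by (simp add: Var_def)

lemma mpeval_Mon [simp]: "mpeval x (Mon m) = monom_eval x m"
  by (simp add: Mon_def)

lemma mpeval_msubst: "mpeval x (msubst \<sigma> p) = mpeval (\<lambda>i. mpeval x (\<sigma> i)) p"
  unfolding msubst_def mpeval_def[of "\<lambda>i. mpeval x (\<sigma> i)"]
  by (simp only: mpeval_sum mpeval_mult mpeval_prod mpeval_power mpeval_Const)

lemma lookup_Const_mult [simp]:
  "Poly_Mapping.lookup (Const c * p) m = c * Poly_Mapping.lookup p (m :: nat \<Rightarrow>\<^sub>0 nat)"
  unfolding Const_def mult_map_scale_conv_mult[symmetric]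
  by transfer (simp add: when_def)


section \<open>Polynomial identities over infinite fields\<close>

lemma powers_linear_independent:
  fixes v :: "'b \<Rightarrow> 'a::field"
  assumes "infinite (UNIV :: 'a set)" "finite A" "inj_on e A"
    and "\<And>t. t \<noteq> 0 \<Longrightarrow> (\<Sum>k\<in>A. v k * t ^ e k) = 0"
  shows "\<forall>k\<in>A. v k = 0"
proof (rule ccontr)
  assume "\<not> (\<forall>k\<in>A. v k = 0)"
  then obtain k0 where k0: "k0 \<in> A" "v k0 \<noteq> 0" by auto
  define P where "P = (\<Sum>k\<in>A. monom (v k) (e k))"
  have "coeff P (e k0) = (\<Sum>k\<in>A. if k = k0 then v k else 0)"
    unfolding P_def coeff_sum coeff_monom
    by (rule sum.cong) (use assms k0 in \<open>auto dest: inj_onD\<close>)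
  also have "\<dots> = v k0" using k0 assms by simp
  finally have "P \<noteq> 0" using k0 by auto
  then have "finite {t. poly P t = 0}" by (rule poly_roots_finite)
  moreover have "UNIV - {0} \<subseteq> {t. poly P t = 0}"
    using assms(4) by (auto simp: P_def poly_sum poly_monom mult.commute)
  ultimately show False using assms(1) by (meson finite_Diff2 finite.emptyI finite_insert finite_subset)
qed

lemma power_eq_power_on_nonzero_imp_eq:
  assumes "infinite (UNIV :: 'a::field set)" and "\<And>t :: 'a. t \<noteq> 0 \<Longrightarrow> t ^ a = t ^ b"
  shows "a = b"
proof (rule ccontr)
  assume "a \<noteq> b"
  have "\<forall>k\<in>{a, b}. (if k = a then 1 else - 1 :: 'a) = 0"
    by (rule powers_linear_independent[OF assms(1), where e = id]) (use assms(2) \<open>a \<noteq> b\<close> in auto)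
  then show False by simp
qed

lemma base_expansion_inj:
  fixes f g :: "nat \<Rightarrow> nat"
  assumes "\<forall>i<N. f i < B" "\<forall>i<N. g i < B" "(\<Sum>i<N. f i * B ^ i) = (\<Sum>i<N. g i * B ^ i)"
  shows "\<forall>i<N. f i = g i"
  using assms
proof (induction N arbitrary: f g)
  case (Suc N)
  have shift: "(\<Sum>i<Suc N. h i * B ^ i) = h 0 + B * (\<Sum>i<N. h (Suc i) * B ^ i)" for h :: "nat \<Rightarrow> nat"
    unfolding sum.lessThan_Suc_shift by (simp add: sum_distrib_left mult_ac)
  have "(f 0 + B * (\<Sum>i<N. f (Suc i) * B ^ i)) mod B = (g 0 + B * (\<Sum>i<N. g (Suc i) * B ^ i)) mod B"
    using Suc.prems(3) by (simp only: shift)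
  then have head: "f 0 = g 0" using Suc.prems(1,2) by simp
  then have "B * (\<Sum>i<N. f (Suc i) * B ^ i) = B * (\<Sum>i<N. g (Suc i) * B ^ i)"
    using Suc.prems(3) by (simp only: shift)
  then have "(\<Sum>i<N. f (Suc i) * B ^ i) = (\<Sum>i<N. g (Suc i) * B ^ i)"
    using Suc.prems(1) by (cases "B = 0") auto
  then have tail: "\<forall>i<N. f (Suc i) = g (Suc i)"
    by (intro Suc.IH) (use Suc.prems in auto)
  show ?case
    using head tail by (auto simp: less_Suc_eq_0_disj)
qed simp

(* e m is the number with base-B digits the exponents of m, B exceeding every exponent in M. *)
lemma kronecker_substitution:
  assumes "finite M"
  obtains e :: "(nat \<Rightarrow>\<^sub>0 nat) \<Rightarrow> nat" and B :: nat where "inj_on e M"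
    and "\<And>m (t :: 'a::comm_semiring_1). m \<in> M \<Longrightarrow> monom_eval (\<lambda>i. t ^ B ^ i) m = t ^ e m"
proof -
  obtain N where N: "\<Union> (Poly_Mapping.keys ` M) \<subseteq> {..<N}"
    using assms finite_nat_bounded by (metis finite_UN_I finite_keys)
  define B where "B = Suc (\<Sum>m\<in>M. \<Sum>i\<in>Poly_Mapping.keys m. Poly_Mapping.lookup m i)"
  have small: "Poly_Mapping.lookup m i < B" if "m \<in> M" for m i
  proof (cases "i \<in> Poly_Mapping.keys m")
    case True
    have "Poly_Mapping.lookup m i \<le> (\<Sum>i\<in>Poly_Mapping.keys m. Poly_Mapping.lookup m i)"
      using True by (intro member_le_sum) auto
    also have "\<dots> \<le> (\<Sum>m\<in>M. \<Sum>i\<in>Poly_Mapping.keys m. Poly_Mapping.lookup m i)"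
      using that assms by (intro member_le_sum) auto
    finally show ?thesis by (simp add: B_def)
  qed (simp add: in_keys_iff B_def)
  have keys_N: "Poly_Mapping.keys m \<subseteq> {..<N}" if "m \<in> M" for m
    using N that by auto
  define e where "e m = (\<Sum>i<N. Poly_Mapping.lookup m i * B ^ i)" for m
  have "inj_on e M"
  proof (rule inj_onI)
    fix m m' assume m: "m \<in> M" and m': "m' \<in> M" and "e m = e m'"
    then have "\<forall>i<N. Poly_Mapping.lookup m i = Poly_Mapping.lookup m' i"
      by (intro base_expansion_inj) (auto simp: e_def small)
    moreover have "Poly_Mapping.lookup m i = 0" "Poly_Mapping.lookup m' i = 0" if "\<not> i < N" for i
      using keys_N[OF m] keys_N[OF m'] that by (auto simp: in_keys_iff)
    ultimately show "m = m'" by (intro poly_mapping_eqI) (metis)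
  qed
  moreover have "monom_eval (\<lambda>i. t ^ B ^ i) m = t ^ e m" if "m \<in> M" for m and t :: 'a
  proof -
    have "monom_eval (\<lambda>i. t ^ B ^ i) m = (\<Prod>i<N. (t ^ B ^ i) ^ Poly_Mapping.lookup m i)"
      by (rule monom_eval_superset) (use keys_N that in auto)
    then show ?thesis by (simp add: e_def power_sum flip: power_mult) (simp add: mult.commute)
  qed
  ultimately show ?thesis using that by blast
qed

lemma mpoly_eq_0_if_mpeval_eq_0:
  fixes p :: "'a::field mpoly"
  assumes "infinite (UNIV :: 'a set)" and "\<And>x. mpeval x p = 0"
  shows "p = 0"
proof -
  obtain e B where inj: "inj_on e (Poly_Mapping.keys p)"
    and subst: "\<And>m (t :: 'a). m \<in> Poly_Mapping.keys p \<Longrightarrow> monom_eval (\<lambda>i. t ^ B ^ i) m = t ^ e m"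
    using kronecker_substitution[of "Poly_Mapping.keys p"] by auto
  have "\<forall>m\<in>Poly_Mapping.keys p. Poly_Mapping.lookup p m = 0"
  proof (rule powers_linear_independent[OF assms(1) _ inj])
    fix t :: 'a
    show "(\<Sum>m\<in>Poly_Mapping.keys p. Poly_Mapping.lookup p m * t ^ e m) = 0"
      using assms(2)[of "\<lambda>i. t ^ B ^ i"] by (simp add: mpeval_eq_sum subst)
  qed simp
  then show ?thesis by (metis in_keys_iff keys_eq_empty ex_in_conv)
qed

lemma mpoly_eqI_mpeval:
  fixes p q :: "'a::field mpoly"
  assumes "infinite (UNIV :: 'a set)" and "\<And>x. mpeval x p = mpeval x q"
  shows "p = q"
  using mpoly_eq_0_if_mpeval_eq_0[OF assms(1), of "p - q"] assms(2) by simp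

lemma alg_closed_infinite:
  assumes "alg_closed_field_type TYPE('a::field)"
  shows "infinite (UNIV :: 'a set)"
proof
  assume fin: "finite (UNIV :: 'a set)"
  define Q where "Q = (\<Prod>a\<in>(UNIV :: 'a set). [:- a, 1:]) + 1"
  have "degree (\<Prod>a\<in>(UNIV :: 'a set). [:- a, 1:]) = card (UNIV :: 'a set)"
    by (subst degree_prod_eq_sum_degree) auto
  moreover have "card (UNIV :: 'a set) > 0" using fin by (simp add: card_gt_0_iff)
  ultimately have "degree Q \<ge> 1" unfolding Q_def by (subst degree_add_eq_left) auto
  then obtain x where "poly Q x = 0"
    using assms unfolding alg_closed_field_type_def by blast
  moreover have "poly (\<Prod>a\<in>(UNIV :: 'a set). [:- a, 1:]) x = 0"
    unfolding poly_prod using fin by (intro prod_zero bexI[of _ x]) auto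
  ultimately show False by (simp add: Q_def)
qed

lemma alg_closed_nth_root:
  assumes "alg_closed_field_type TYPE('a::field)" "k \<ge> 1"
  shows "\<exists>y :: 'a. y ^ k = a"
proof -
  have "degree (monom 1 k + [:- a:]) = k"
    using assms(2) by (subst degree_add_eq_left) (auto simp: degree_monom_eq)
  then obtain y where "poly (monom 1 k + [:- a:]) y = 0"
    using assms unfolding alg_closed_field_type_def by (metis order_refl)
  then show ?thesis by (auto simp: poly_monom)
qed

definition rescale :: "(nat \<Rightarrow> 'a::comm_semiring_1) \<Rightarrow> 'a mpoly \<Rightarrow> 'a mpoly" where
  "rescale \<alpha> p = Poly_Mapping.mapp (\<lambda>m v. monom_eval \<alpha> m * v) p"

lemma lookup_rescale: "Poly_Mapping.lookup (rescale \<alpha> p) m = monom_eval \<alpha> m * Poly_Mapping.lookup p m"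
  by (simp add: rescale_def lookup_mapp when_def in_keys_iff)

lemma mpeval_rescale: "mpeval x (rescale \<alpha> p) = mpeval (\<lambda>i. \<alpha> i * x i) p"
proof -
  have "mpeval x (rescale \<alpha> p) =
      (\<Sum>m\<in>Poly_Mapping.keys p. Poly_Mapping.lookup (rescale \<alpha> p) m * monom_eval x m)"
    by (rule mpeval_superset) (auto simp: rescale_def intro: set_mp[OF keys_mapp_subset])
  then show ?thesis by (simp add: lookup_rescale mpeval_eq_sum monom_eval_mult mult_ac)
qed

lemma lookup_eq_if_mpeval_eq_rescaled:
  fixes p q :: "'a::field mpoly"
  assumes "infinite (UNIV :: 'a set)"
    and "\<And>x. mpeval x p = c * mpeval (\<lambda>i. \<alpha> i * x i) q"
  shows "Poly_Mapping.lookup p m = c * monom_eval \<alpha> m * Poly_Mapping.lookup q m"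
proof -
  have "p = Const c * rescale \<alpha> q"
    by (rule mpoly_eqI_mpeval[OF assms(1)]) (simp add: assms(2) mpeval_rescale)
  then show ?thesis by (simp add: lookup_rescale)
qed

lemma torus_invariant_balanced:
  fixes p :: "'a::field mpoly"
  assumes "infinite (UNIV :: 'a set)"
    and inv: "\<And>t x. t \<noteq> 0 \<Longrightarrow> mpeval (\<lambda>i. t ^ u i * inverse t ^ w i * x i) p = mpeval x p"
    and m: "m \<in> Poly_Mapping.keys p"
  shows "(\<Sum>i\<in>Poly_Mapping.keys m. u i * Poly_Mapping.lookup m i) =
         (\<Sum>i\<in>Poly_Mapping.keys m. w i * Poly_Mapping.lookup m i)" (is "?a = ?b")
proof (rule power_eq_power_on_nonzero_imp_eq[OF assms(1)])
  fix t :: 'a assume t: "t \<noteq> 0"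
  have "Poly_Mapping.lookup p m =
      1 * monom_eval (\<lambda>i. t ^ u i * inverse t ^ w i) m * Poly_Mapping.lookup p m"
    by (rule lookup_eq_if_mpeval_eq_rescaled[OF assms(1)]) (simp add: inv t)
  then have "1 = monom_eval (\<lambda>i. t ^ u i * inverse t ^ w i) m"
    using m by (simp add: in_keys_iff)
  also have "\<dots> = t ^ ?a * inverse t ^ ?b"
    by (simp only: monom_eval_mult monom_eval_power_weights)
  finally show "t ^ ?a = t ^ ?b"
    using t by (simp add: power_inverse field_simps)
qed

definition wscale :: "nat \<Rightarrow> 'a::field \<Rightarrow> (nat \<Rightarrow> 'a) \<Rightarrow> nat \<Rightarrow> 'a" where
  "wscale n c \<phi> = (\<lambda>i. c ^ wt n i * \<phi> i)"

lemma wscale_one [simp]: "wscale n 1 \<phi> = \<phi>"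
  by (simp add: wscale_def)

definition wdeg :: "nat \<Rightarrow> (nat \<Rightarrow>\<^sub>0 nat) \<Rightarrow> nat" where
  "wdeg n m = (\<Sum>i\<in>Poly_Mapping.keys m. wt n i * Poly_Mapping.lookup m i)"

lemma homogeneous_iff_wdeg: "homogeneous n d F \<longleftrightarrow> (\<forall>m\<in>Poly_Mapping.keys F. wdeg n m = d)"
  by (simp add: homogeneous_def wdeg_def)

lemma mpeval_wscale:
  assumes "homogeneous n d F"
  shows "mpeval (wscale n c \<phi>) F = c ^ d * mpeval \<phi> F"
proof -
  have "monom_eval (wscale n c \<phi>) m = c ^ d * monom_eval \<phi> m" if "m \<in> Poly_Mapping.keys F" for m
    using assms that
    by (simp add: wscale_def monom_eval_mult monom_eval_power_weights homogeneous_iff_wdeg wdeg_def)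
  then show ?thesis
    unfolding mpeval_eq_sum sum_distrib_left by (intro sum.cong refl) (simp add: mult_ac)
qed

definition homogeneous_part :: "nat \<Rightarrow> nat \<Rightarrow> 'a::field mpoly \<Rightarrow> 'a mpoly" where
  "homogeneous_part n d F = Poly_Mapping.mapp (\<lambda>m v. if wdeg n m = d then v else 0) F"

lemma lookup_homogeneous_part:
  "Poly_Mapping.lookup (homogeneous_part n d F) m =
     (if wdeg n m = d then Poly_Mapping.lookup F m else 0)"
  by (simp add: homogeneous_part_def lookup_mapp when_def in_keys_iff)

lemma keys_homogeneous_part: "Poly_Mapping.keys (homogeneous_part n d F) \<subseteq> Poly_Mapping.keys F"
  by (simp add: homogeneous_part_def keys_mapp_subset)

lemma homogeneous_part_in_KX: "subfield K \<Longrightarrow> F \<in> KX n K \<Longrightarrow> homogeneous_part n d F \<in> KX n K"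
  using keys_homogeneous_part[of n d F]
  by (auto simp: KX_def lookup_homogeneous_part subfield_def)

lemma homogeneous_homogeneous_part: "homogeneous n d (homogeneous_part n d F)"
  by (auto simp: homogeneous_iff_wdeg in_keys_iff lookup_homogeneous_part split: if_splits)

lemma homogeneous_part_neq_0:
  "m \<in> Poly_Mapping.keys F \<Longrightarrow> homogeneous_part n (wdeg n m) F \<noteq> 0"
  by (metis in_keys_iff lookup_homogeneous_part lookup_zero)

lemma sum_homogeneous_parts:
  assumes "w > 0" and "\<And>m. m \<in> Poly_Mapping.keys F \<Longrightarrow> w dvd wdeg n m \<and> wdeg n m \<le> D"
  shows "F = (\<Sum>k\<le>D. homogeneous_part n (w * k) F)"
proof (rule poly_mapping_eqI)
  fix m
  have "Poly_Mapping.lookup (\<Sum>k\<le>D. homogeneous_part n (w * k) F) m =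
      (\<Sum>k\<le>D. if wdeg n m = w * k then Poly_Mapping.lookup F m else 0)"
    by (simp add: lookup_sum lookup_homogeneous_part)
  also have "\<dots> = Poly_Mapping.lookup F m"
  proof (cases "m \<in> Poly_Mapping.keys F")
    case True
    then obtain k0 where k0: "wdeg n m = w * k0" and "wdeg n m \<le> D"
      using assms(2) by blast
    moreover have "k0 \<le> w * k0" using assms(1) by simp
    ultimately have "k0 \<le> D" by linarith
    moreover have "wdeg n m = w * k \<longleftrightarrow> k = k0" for k
      using k0 assms(1) by auto
    ultimately show ?thesis by simp
  qed (simp add: in_keys_iff if_distrib cong: if_cong)
  finally show "Poly_Mapping.lookup F m = Poly_Mapping.lookup (\<Sum>k\<le>D. homogeneous_part n (w * k) F) m"
    by simp
qed

lemma monom_eval_mon2: "monom_eval x (mon [a, b]) = x 0 ^ a * x 1 ^ b"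
  by (simp add: mon_def lessThan_Suc monom_eval_add mult_ac)

lemma monom_eval_mon3: "monom_eval x (mon [a, b, e]) = x 0 ^ a * x 1 ^ b * x 2 ^ e"
  by (simp add: mon_def lessThan_Suc monom_eval_add numeral_2_eq_2 mult_ac)

definition weq1_value :: "(nat \<Rightarrow> 'a::field) \<Rightarrow> 'a \<Rightarrow> 'a \<Rightarrow> 'a" where
  "weq1_value \<phi> X Y = Y ^ 2 + \<phi> 0 * X * Y + \<phi> 2 * Y - X ^ 3 - \<phi> 1 * X ^ 2 - \<phi> 3 * X - \<phi> 4"

lemma mpeval_weq1: "mpeval y (weq1 \<phi>) = weq1_value \<phi> (y 0) (y 1)"
  by (simp add: weq1_def weq1_value_def)

lemma weq1_value_wscale:
  "(c :: 'a::field) \<noteq> 0 \<Longrightarrow> weq1_value (wscale 1 c \<phi>) X Y = c ^ 6 * weq1_value \<phi> (X / c ^ 2) (Y / c ^ 3)"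
  unfolding weq1_value_def wscale_def wt_def
  by (simp add: power_divide algebra_simps) (simp add: field_simps eval_nat_numeral)

definition weierstrass_subst :: "'a::field \<Rightarrow> 'a \<Rightarrow> 'a \<Rightarrow> 'a \<Rightarrow> nat \<Rightarrow> 'a mpoly" where
  "weierstrass_subst u r s t = (\<lambda>i.
     if i = 0 then Const (u ^ 2) * Var 0 + Const r
     else if i = 1 then Const (u ^ 3) * Var 1 + Const (u ^ 2 * s) * Var 0 + Const t
     else Var i)"

definition weierstrass_coeffs :: "'a::field mpoly \<Rightarrow> nat \<Rightarrow> 'a" where
  "weierstrass_coeffs P = (\<lambda>i.
     if i = 0 then Poly_Mapping.lookup P (mon [1, 1])
     else if i = 1 then - Poly_Mapping.lookup P (mon [2, 0])
     else if i = 2 then Poly_Mapping.lookup P (mon [0, 1])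
     else if i = 3 then - Poly_Mapping.lookup P (mon [1, 0])
     else if i = 4 then - Poly_Mapping.lookup P (mon [0, 0])
     else 0)"

lemma act1_eq:
  "act1 ([u, r, s, t], A, B) \<phi> =
     weierstrass_coeffs (Const (inverse (u ^ 6)) * msubst (weierstrass_subst u r s t) (weq1 \<phi>))"
  unfolding act1_def weierstrass_coeffs_def weierstrass_subst_def Let_def prod.case
  by (simp only: nth_Cons_0 nth_Cons_Suc One_nat_def numeral_2_eq_2 numeral_3_eq_3)

lemma weierstrass_coeffs_rescale:
  assumes "e \<noteq> 0"
    and "\<And>m. Poly_Mapping.lookup P m = e ^ 6 *
      monom_eval (\<lambda>i. if i = 0 then inverse e ^ 2 else if i = 1 then inverse e ^ 3 else 1) m *
      Poly_Mapping.lookup Q m"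
  shows "weierstrass_coeffs P = wscale 1 e (weierstrass_coeffs Q)"
proof -
  have "e ^ 6 * (inverse e ^ 2 * inverse e ^ 3) = e" "e ^ 6 * (inverse e ^ 2) ^ 2 = e ^ 2"
    "e ^ 6 * inverse e ^ 3 = e ^ 3" "e ^ 6 * inverse e ^ 2 = e ^ 4"
    using assms(1) by (simp_all add: field_simps eval_nat_numeral)
  then show ?thesis
    by (simp add: fun_eq_iff weierstrass_coeffs_def wscale_def wt_def assms(2) monom_eval_mon2
        mult.assoc[symmetric])
qed

lemma act1_wscale:
  fixes \<phi> :: "nat \<Rightarrow> 'a::field"
  assumes inf: "infinite (UNIV :: 'a set)" and u: "u \<noteq> 0" and c: "c \<noteq> 0"
  shows "act1 ([u, r, s, t], A, B) (wscale 1 c \<phi>) =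
         wscale 1 (c / u) (act1 ([1, r / c ^ 2, s / c, t / c ^ 3], A', B') \<phi>)"
proof -
  define e where "e = c / u"
  have e: "e \<noteq> 0" using u c by (simp add: e_def)
  have "mpeval x (Const (inverse (u ^ 6)) * msubst (weierstrass_subst u r s t) (weq1 (wscale 1 c \<phi>))) =
      e ^ 6 * mpeval (\<lambda>i. (if i = 0 then inverse e ^ 2 else if i = 1 then inverse e ^ 3 else 1) * x i)
        (Const (inverse (1 ^ 6)) * msubst (weierstrass_subst 1 (r / c ^ 2) (s / c) (t / c ^ 3)) (weq1 \<phi>))"
    for x
  proof -
    have "mpeval x (Const (inverse (u ^ 6)) * msubst (weierstrass_subst u r s t) (weq1 (wscale 1 c \<phi>))) =
        inverse (u ^ 6) * weq1_value (wscale 1 c \<phi>) (u ^ 2 * x 0 + r) (u ^ 3 * x 1 + u ^ 2 * s * x 0 + t)"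
      by (simp add: mpeval_msubst mpeval_weq1 weierstrass_subst_def)
    also have "\<dots> = inverse (u ^ 6) * c ^ 6 *
        weq1_value \<phi> ((u ^ 2 * x 0 + r) / c ^ 2) ((u ^ 3 * x 1 + u ^ 2 * s * x 0 + t) / c ^ 3)"
      by (simp only: weq1_value_wscale[OF c] mult.assoc)
    also have "inverse (u ^ 6) * c ^ 6 = e ^ 6"
      by (simp add: e_def power_divide field_simps)
    also have "(u ^ 2 * x 0 + r) / c ^ 2 = inverse e ^ 2 * x 0 + r / c ^ 2"
      using c by (simp add: e_def field_simps power_divide)
    also have "(u ^ 3 * x 1 + u ^ 2 * s * x 0 + t) / c ^ 3 =
        inverse e ^ 3 * x 1 + s / c * (inverse e ^ 2 * x 0) + t / c ^ 3"
      using c by (simp add: e_def field_simps power_divide eval_nat_numeral)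
    finally show ?thesis
      by (simp add: mpeval_msubst mpeval_weq1 weierstrass_subst_def)
  qed
  then show ?thesis
    unfolding act1_eq e_def[symmetric]
    by (intro weierstrass_coeffs_rescale[OF e] lookup_eq_if_mpeval_eq_rescaled[OF inf])
qed

definition weq2_value :: "(nat \<Rightarrow> 'a::field) \<Rightarrow> 'a \<Rightarrow> 'a \<Rightarrow> 'a \<Rightarrow> 'a" where
  "weq2_value \<phi> X Z Y = Y ^ 2 + (\<phi> 0 * X ^ 2 + \<phi> 1 * X * Z + \<phi> 2 * Z ^ 2) * Y
     - (\<phi> 3 * X ^ 4 + \<phi> 4 * X ^ 3 * Z + \<phi> 5 * X ^ 2 * Z ^ 2 + \<phi> 6 * X * Z ^ 3 + \<phi> 7 * Z ^ 4)"

lemma mpeval_weq2: "mpeval y (weq2 \<phi>) = weq2_value \<phi> (y 0) (y 1) (y 2)"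
  by (simp add: weq2_def weq2_value_def lessThan_Suc monom_eval_mon2 eval_nat_numeral algebra_simps)

lemma weq2_value_wscale:
  "(c :: 'a::field) \<noteq> 0 \<Longrightarrow> weq2_value (wscale 2 c \<phi>) X Z Y = c ^ 2 * weq2_value \<phi> X Z (Y / c)"
  unfolding weq2_value_def wscale_def wt_def
  by (simp add: power_divide algebra_simps) (simp add: field_simps eval_nat_numeral)

lemma weq2_value_homogeneous:
  "(l :: 'a::field) \<noteq> 0 \<Longrightarrow> weq2_value \<phi> (l * X) (l * Z) Y = l ^ 4 * weq2_value \<phi> X Z (Y / l ^ 2)"
  unfolding weq2_value_def
  by (simp add: power_divide algebra_simps) (simp add: field_simps eval_nat_numeral)

definition quartic_subst :: "'a::field \<Rightarrow> 'a \<Rightarrow> 'a \<Rightarrow> 'a \<Rightarrow> 'a mat \<Rightarrow> nat \<Rightarrow> 'a mpoly" where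
  "quartic_subst \<mu> r0 r1 r2 B = (\<lambda>i.
     if i = 0 then Const (B $$ (0, 0)) * Var 0 + Const (B $$ (1, 0)) * Var 1
     else if i = 1 then Const (B $$ (0, 1)) * Var 0 + Const (B $$ (1, 1)) * Var 1
     else if i = 2 then Const (inverse \<mu>) * Var 2 + Const r0 * Var 0 ^ 2
       + Const r1 * Var 0 * Var 1 + Const r2 * Var 1 ^ 2
     else Var i)"

definition quartic_coeffs :: "'a::field mpoly \<Rightarrow> nat \<Rightarrow> 'a" where
  "quartic_coeffs P = (\<lambda>i.
     if i < 3 then Poly_Mapping.lookup P (mon [2 - i, i, 1])
     else if i < 8 then - Poly_Mapping.lookup P (mon [4 - (i - 3), i - 3, 0])
     else 0)"

lemma act2_eq:
  "act2 ([\<mu>, r0, r1, r2], A, B) \<phi> =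
     quartic_coeffs (Const (\<mu> ^ 2) * msubst (quartic_subst \<mu> r0 r1 r2 B) (weq2 \<phi>))"
  unfolding act2_def quartic_coeffs_def quartic_subst_def Let_def prod.case
  by (simp only: nth_Cons_0 nth_Cons_Suc One_nat_def numeral_2_eq_2 numeral_3_eq_3)

lemma quartic_coeffs_rescale:
  assumes "e \<noteq> 0"
    and "\<And>m. Poly_Mapping.lookup P m =
      e ^ 2 * monom_eval (\<lambda>i. if i = 2 then inverse e else 1) m * Poly_Mapping.lookup Q m"
  shows "quartic_coeffs P = wscale 2 e (quartic_coeffs Q)"
proof -
  have "e ^ 2 * inverse e = e" using assms(1) by (simp add: eval_nat_numeral)
  then show ?thesis
    by (simp add: fun_eq_iff quartic_coeffs_def wscale_def wt_def assms(2) monom_eval_mon3)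
qed

lemma act2_wscale:
  fixes \<phi> :: "nat \<Rightarrow> 'a::field"
  assumes inf: "infinite (UNIV :: 'a set)" and \<mu>: "\<mu> \<noteq> 0" and c: "c \<noteq> 0" and l: "l \<noteq> 0"
    and B: "\<And>i j. i < 2 \<Longrightarrow> j < 2 \<Longrightarrow> B $$ (i, j) = l * B' $$ (i, j)"
  shows "act2 ([\<mu>, r0, r1, r2], A, B) (wscale 2 c \<phi>) =
         wscale 2 (c * \<mu> * l ^ 2)
           (act2 ([1, r0 / (c * l ^ 2), r1 / (c * l ^ 2), r2 / (c * l ^ 2)], A', B') \<phi>)"
proof -
  define e where "e = c * \<mu> * l ^ 2"
  have e: "e \<noteq> 0" using \<mu> c l by (simp add: e_def)
  have "mpeval x (Const (\<mu> ^ 2) * msubst (quartic_subst \<mu> r0 r1 r2 B) (weq2 (wscale 2 c \<phi>))) =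
      e ^ 2 * mpeval (\<lambda>i. (if i = 2 then inverse e else 1) * x i)
        (Const (1 ^ 2) * msubst (quartic_subst 1 (r0 / (c * l ^ 2)) (r1 / (c * l ^ 2)) (r2 / (c * l ^ 2)) B')
          (weq2 \<phi>))"
    for x
  proof -
    define X where "X = B' $$ (0, 0) * x 0 + B' $$ (1, 0) * x 1"
    define Z where "Z = B' $$ (0, 1) * x 0 + B' $$ (1, 1) * x 1"
    define R where "R = r0 * x 0 ^ 2 + r1 * x 0 * x 1 + r2 * x 1 ^ 2"
    have "mpeval x (Const (\<mu> ^ 2) * msubst (quartic_subst \<mu> r0 r1 r2 B) (weq2 (wscale 2 c \<phi>))) =
        \<mu> ^ 2 * weq2_value (wscale 2 c \<phi>) (l * X) (l * Z) (inverse \<mu> * x 2 + R)"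
      by (simp add: mpeval_msubst mpeval_weq2 quartic_subst_def X_def Z_def R_def B algebra_simps)
    also have "\<dots> = \<mu> ^ 2 * (l ^ 4 * (c ^ 2 * weq2_value \<phi> X Z ((inverse \<mu> * x 2 + R) / l ^ 2 / c)))"
      by (simp only: weq2_value_wscale[OF c] weq2_value_homogeneous[OF l])
    also have "(inverse \<mu> * x 2 + R) / l ^ 2 / c = inverse e * x 2 + R / (c * l ^ 2)"
      using \<mu> c l by (simp add: e_def field_simps)
    also have "\<mu> ^ 2 * (l ^ 4 * (c ^ 2 * weq2_value \<phi> X Z (inverse e * x 2 + R / (c * l ^ 2)))) =
        e ^ 2 * weq2_value \<phi> X Z (inverse e * x 2 + R / (c * l ^ 2))"
      by (simp add: e_def power_mult_distrib eval_nat_numeral)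
    finally show ?thesis
      by (simp add: mpeval_msubst mpeval_weq2 quartic_subst_def X_def Z_def R_def add_divide_distrib
          add.assoc)
  qed
  then show ?thesis
    unfolding act2_eq e_def[symmetric]
    by (intro quartic_coeffs_rescale[OF e] lookup_eq_if_mpeval_eq_rescaled[OF inf])
qed

lemma mpeval_linsubst: "mpeval x (linsubst nv B j) = (\<Sum>i<nv. B $$ (i, j) * x i)"
  by (simp add: linsubst_def mpeval_sum)

lemma mpeval_linsubst_smult:
  assumes "j < nv" and "\<And>i j. i < nv \<Longrightarrow> j < nv \<Longrightarrow> B $$ (i, j) = l * B' $$ (i, j)"
  shows "mpeval x (linsubst nv B j) = l * mpeval x (linsubst nv B' j)"
  using assms by (simp add: mpeval_linsubst sum_distrib_left mult.assoc)

lemma monom_eval_linsubst_smult: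
  assumes "Poly_Mapping.keys m \<subseteq> {..<nv}"
    and "\<And>i j. i < nv \<Longrightarrow> j < nv \<Longrightarrow> B $$ (i, j) = l * B' $$ (i, j)"
  shows "monom_eval (\<lambda>j. mpeval x (linsubst nv B j)) m =
         monom_eval (\<lambda>_. l) m * monom_eval (\<lambda>j. mpeval x (linsubst nv B' j)) m"
proof -
  have "monom_eval (\<lambda>j. mpeval x (linsubst nv B j)) m =
      monom_eval (\<lambda>j. l * mpeval x (linsubst nv B' j)) m"
    by (rule monom_eval_cong) (use assms in \<open>auto intro: mpeval_linsubst_smult\<close>)
  then show ?thesis by (simp only: monom_eval_mult)
qed

lemma mons3_eq:
  "mons3 = [mon [0,0,3], mon [0,1,2], mon [0,2,1], mon [0,3,0], mon [1,0,2], mon [1,1,1],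
    mon [1,2,0], mon [2,0,1], mon [2,1,0], mon [3,0,0]]"
  by (simp add: mons3_def upt_rec eval_nat_numeral)

lemma keys_mon3: "Poly_Mapping.keys (mon [a, b, e]) \<subseteq> {..<3}"
  by (auto simp: in_keys_iff mon_def lessThan_Suc numeral_2_eq_2 lookup_add lookup_single when_def
      split: if_splits)

lemma mons3_cubic:
  assumes "t < 10"
  shows "Poly_Mapping.keys (mons3 ! t) \<subseteq> {..<3} \<and> monom_eval (\<lambda>_. l) (mons3 ! t) = l ^ 3"
proof -
  have "\<forall>m\<in>set mons3. Poly_Mapping.keys m \<subseteq> {..<3}"
    by (simp add: mons3_eq keys_mon3)
  moreover have "\<forall>m\<in>set mons3. monom_eval (\<lambda>_. l) m = l ^ 3"
    by (simp add: mons3_eq monom_eval_mon3 eval_nat_numeral mult_ac)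
  moreover have "length mons3 = 10"
    by (simp add: mons3_eq)
  ultimately show ?thesis using assms by (metis nth_mem)
qed

lemma mpeval_cubic3: "mpeval y (cubic3 \<phi>) = (\<Sum>t<10. \<phi> t * monom_eval y (mons3 ! t))"
  by (simp add: cubic3_def mpeval_sum)

lemma act3_wscale:
  fixes \<phi> :: "nat \<Rightarrow> 'a::field"
  assumes inf: "infinite (UNIV :: 'a set)"
    and B: "\<And>i j. i < 3 \<Longrightarrow> j < 3 \<Longrightarrow> B $$ (i, j) = l * B' $$ (i, j)"
  shows "act3 ([\<mu>], A, B) (wscale 3 c \<phi>) = wscale 3 (c * \<mu> * l ^ 3) (act3 ([1], A', B') \<phi>)"
proof -
  have "Const \<mu> * msubst (linsubst 3 B) (cubic3 (wscale 3 c \<phi>)) =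
      Const (c * \<mu> * l ^ 3) * (Const 1 * msubst (linsubst 3 B') (cubic3 \<phi>))"
  proof (rule mpoly_eqI_mpeval[OF inf])
    fix x
    have "monom_eval (\<lambda>j. mpeval x (linsubst 3 B j)) (mons3 ! t) =
        l ^ 3 * monom_eval (\<lambda>j. mpeval x (linsubst 3 B' j)) (mons3 ! t)" if "t < 10" for t
      using monom_eval_linsubst_smult[OF _ B] mons3_cubic[OF that] by metis
    then show "mpeval x (Const \<mu> * msubst (linsubst 3 B) (cubic3 (wscale 3 c \<phi>))) =
        mpeval x (Const (c * \<mu> * l ^ 3) * (Const 1 * msubst (linsubst 3 B') (cubic3 \<phi>)))"
      by (simp add: mpeval_msubst mpeval_cubic3 wscale_def wt_def sum_distrib_left mult_ac)
  qed
  then show ?thesis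
    unfolding act3_def Let_def prod.case by (simp add: wscale_def wt_def fun_eq_iff)
qed

lemma keys_single_add_single:
  "i < n \<Longrightarrow> j < n \<Longrightarrow>
    Poly_Mapping.keys (Poly_Mapping.single i a + Poly_Mapping.single j (b :: nat)) \<subseteq> {..<n}"
  using keys_add[of "Poly_Mapping.single i a" "Poly_Mapping.single j b"]
  by (auto split: if_splits)

lemma mons4_quadratic:
  assumes "t < 10"
  shows "Poly_Mapping.keys (mons4 ! t) \<subseteq> {..<4} \<and> monom_eval (\<lambda>_. l) (mons4 ! t) = l ^ 2"
proof -
  have "\<forall>m\<in>set mons4. Poly_Mapping.keys m \<subseteq> {..<4} \<and> monom_eval (\<lambda>_. l) m = l ^ 2"
    by (auto simp: mons4_def keys_single_add_single monom_eval_add power2_eq_square)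
  moreover have "length mons4 = 10"
    by (simp add: mons4_def upt_rec)
  ultimately show ?thesis using assms by (metis nth_mem)
qed

lemma mpeval_quad4: "mpeval y (quad4 \<phi> b) = (\<Sum>t<10. \<phi> (10 * b + t) * monom_eval y (mons4 ! t))"
  by (simp add: quad4_def mpeval_sum)

lemma act4_wscale:
  fixes \<phi> :: "nat \<Rightarrow> 'a::field"
  assumes inf: "infinite (UNIV :: 'a set)"
    and A: "\<And>i j. i < 2 \<Longrightarrow> j < 2 \<Longrightarrow> A $$ (i, j) = l * A' $$ (i, j)"
    and B: "\<And>i j. i < 4 \<Longrightarrow> j < 4 \<Longrightarrow> B $$ (i, j) = v * B' $$ (i, j)"
  shows "act4 (cs, A, B) (wscale 4 c \<phi>) = wscale 4 (c * l * v ^ 2) (act4 (cs', A', B') \<phi>)"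
proof -
  have "(\<Sum>b<2. Const (A $$ (a, b)) * msubst (linsubst 4 B) (quad4 (wscale 4 c \<phi>) b)) =
      Const (c * l * v ^ 2) * (\<Sum>b<2. Const (A' $$ (a, b)) * msubst (linsubst 4 B') (quad4 \<phi> b))"
    if a: "a < 2" for a
  proof (rule mpoly_eqI_mpeval[OF inf])
    fix x
    have "monom_eval (\<lambda>j. mpeval x (linsubst 4 B j)) (mons4 ! t) =
        v ^ 2 * monom_eval (\<lambda>j. mpeval x (linsubst 4 B' j)) (mons4 ! t)" if "t < 10" for t
      using monom_eval_linsubst_smult[OF _ B] mons4_quadratic[OF that] by metis
    then show "mpeval x (\<Sum>b<2. Const (A $$ (a, b)) * msubst (linsubst 4 B) (quad4 (wscale 4 c \<phi>) b)) =
        mpeval x (Const (c * l * v ^ 2) *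
          (\<Sum>b<2. Const (A' $$ (a, b)) * msubst (linsubst 4 B') (quad4 \<phi> b)))"
      using A[OF a]
      by (simp add: mpeval_sum mpeval_msubst mpeval_quad4 wscale_def wt_def sum_distrib_left mult_ac)
  qed
  then show ?thesis
    unfolding act4_def Let_def prod.case by (simp add: wscale_def wt_def fun_eq_iff)
qed

lemma pairs5_eq: "pairs5 = [(0,1), (0,2), (0,3), (0,4), (1,2), (1,3), (1,4), (2,3), (2,4), (3,4)]"
  by (simp add: pairs5_def upt_rec eval_nat_numeral)

lemma pairs5_nth:
  "p < 10 \<Longrightarrow> fst (pairs5 ! p) < snd (pairs5 ! p) \<and> snd (pairs5 ! p) < 5"
  using nth_mem[of p pairs5] by (auto simp: pairs5_eq)

lemma mpeval_alt5:
  "mpeval y (alt5 \<phi> i j) = (\<Sum>p<10. \<Sum>l<5.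
      if pairs5 ! p = (i, j) then \<phi> (5 * p + l) * y l
      else if pairs5 ! p = (j, i) then - (\<phi> (5 * p + l) * y l)
      else 0)"
  unfolding alt5_def mpeval_sum by (intro sum.cong refl) simp

lemma act5_wscale:
  fixes \<phi> :: "nat \<Rightarrow> 'a::field"
  assumes inf: "infinite (UNIV :: 'a set)"
    and A: "\<And>i j. i < 5 \<Longrightarrow> j < 5 \<Longrightarrow> A $$ (i, j) = l * A' $$ (i, j)"
    and B: "\<And>i j. i < 5 \<Longrightarrow> j < 5 \<Longrightarrow> B $$ (i, j) = v * B' $$ (i, j)"
  shows "act5 (cs, A, B) (wscale 5 c \<phi>) = wscale 5 (c * l ^ 2 * v) (act5 (cs', A', B') \<phi>)"
proof -
  have "msubst (linsubst 5 B)
        (\<Sum>k<5. \<Sum>q<5. Const (A $$ (i, k) * A $$ (j, q)) * alt5 (wscale 5 c \<phi>) k q) =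
      Const (c * l ^ 2 * v) * msubst (linsubst 5 B')
        (\<Sum>k<5. \<Sum>q<5. Const (A' $$ (i, k) * A' $$ (j, q)) * alt5 \<phi> k q)"
    if ij: "i < 5" "j < 5" for i j
  proof (rule mpoly_eqI_mpeval[OF inf])
    fix x
    have "mpeval x (linsubst 5 B q) = v * mpeval x (linsubst 5 B' q)" if "q < 5" for q
      using mpeval_linsubst_smult[OF that B] by simp
    then have "mpeval (\<lambda>q. mpeval x (linsubst 5 B q)) (alt5 (wscale 5 c \<phi>) k q) =
        c * v * mpeval (\<lambda>q. mpeval x (linsubst 5 B' q)) (alt5 \<phi> k q)" for k q
      unfolding mpeval_alt5 sum_distrib_left by (intro sum.cong refl) (simp add: wscale_def wt_def)
    then show "mpeval x (msubst (linsubst 5 B)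
          (\<Sum>k<5. \<Sum>q<5. Const (A $$ (i, k) * A $$ (j, q)) * alt5 (wscale 5 c \<phi>) k q)) =
        mpeval x (Const (c * l ^ 2 * v) * msubst (linsubst 5 B')
          (\<Sum>k<5. \<Sum>q<5. Const (A' $$ (i, k) * A' $$ (j, q)) * alt5 \<phi> k q))"
      using ij by (simp add: mpeval_msubst mpeval_sum A sum_distrib_left power2_eq_square mult_ac)
  qed
  moreover have "fst (pairs5 ! (t div 5)) < 5" "snd (pairs5 ! (t div 5)) < 5" if "t < 50" for t
  proof -
    have "t div 5 < 10" using that by presburger
    then show "fst (pairs5 ! (t div 5)) < 5" "snd (pairs5 ! (t div 5)) < 5"
      using pairs5_nth[of "t div 5"] by auto
  qed
  ultimately show ?thesis
    unfolding act5_def Let_def prod.case by (simp add: wscale_def wt_def fun_eq_iff)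
qed

section \<open>Factorisation through the commutator subgroup\<close>

lemma smult_det_one_factorization:
  assumes "alg_closed_field_type TYPE('a::field)" "B \<in> carrier_mat k k" "det B \<noteq> (0 :: 'a)" "0 < k"
  obtains l B' where "l ^ k = det B" "l \<noteq> 0" "B' \<in> carrier_mat k k" "det B' = 1"
    "\<And>i j. i < k \<Longrightarrow> j < k \<Longrightarrow> B $$ (i, j) = l * B' $$ (i, j)"
proof -
  obtain l where l: "l ^ k = det B"
    using alg_closed_nth_root[OF assms(1)] assms(4) by (metis Suc_leI One_nat_def)
  then have l0: "l \<noteq> 0" using assms(3,4) by (auto simp: power_0_left)
  show ?thesis
  proof (rule that[OF l l0])
    show "(1 / l) \<cdot>\<^sub>m B \<in> carrier_mat k k" "det ((1 / l) \<cdot>\<^sub>m B) = 1"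
      using assms(2,3) l by (simp_all add: power_divide)
    show "B $$ (i, j) = l * ((1 / l) \<cdot>\<^sub>m B) $$ (i, j)" if "i < k" "j < k" for i j
      using assms(2) l0 that by simp
  qed
qed

lemma length_4_cases: "length xs = 4 \<Longrightarrow> \<exists>a b c d. xs = [a, b, c, d]"
  by (auto simp: length_Suc_conv numeral_eq_Suc)

lemma Gcal_1_factorization:
  assumes inf: "infinite (UNIV :: 'a::field set)" and g: "(g :: 'a gelt) \<in> Gcal 1"
  shows "\<exists>h\<in>Gcomm 1. \<exists>e. e ^ wfac 1 = gdet 1 g \<and> (\<forall>\<phi>. act 1 g \<phi> = wscale 1 e (act 1 h \<phi>))"
proof -
  obtain u r s t A B where g_eq: "g = ([u, r, s, t], A, B)" and u: "u \<noteq> 0"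
    and AB: "A = zero_mat 0 0" "B = zero_mat 0 0"
    using g length_4_cases by (fastforce simp: Gcal_def)
  have "([1, r, s, t], A, B) \<in> Gcomm 1" using AB by (simp add: Gcomm_def Gcal_def)
  moreover have "(1 / u) ^ wfac 1 = gdet 1 g"
    by (simp add: g_eq gdet_def wfac_def field_simps)
  moreover have "act 1 g \<phi> = wscale 1 (1 / u) (act 1 ([1, r, s, t], A, B) \<phi>)" for \<phi>
    using act1_wscale[OF inf u one_neq_zero, of r s t A B \<phi> A B] by (simp add: g_eq act_def)
  ultimately show ?thesis by blast
qed

lemma Gcal_2_factorization:
  assumes inf: "infinite (UNIV :: 'a::field set)" and ac: "alg_closed_field_type TYPE('a)"
    and g: "(g :: 'a gelt) \<in> Gcal 2"
  shows "\<exists>h\<in>Gcomm 2. \<exists>e. e ^ wfac 2 = gdet 2 g \<and> (\<forall>\<phi>. act 2 g \<phi> = wscale 2 e (act 2 h \<phi>))"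
proof -
  obtain \<mu> r0 r1 r2 A B where g_eq: "g = ([\<mu>, r0, r1, r2], A, B)" and \<mu>: "\<mu> \<noteq> 0"
    and A: "A = zero_mat 0 0" and B: "B \<in> carrier_mat 2 2" "det B \<noteq> 0"
    using g length_4_cases by (fastforce simp: Gcal_def)
  obtain l B' where l: "l ^ 2 = det B" "l \<noteq> 0" and B': "B' \<in> carrier_mat 2 2" "det B' = 1"
    and BB': "\<And>i j. i < 2 \<Longrightarrow> j < 2 \<Longrightarrow> B $$ (i, j) = l * B' $$ (i, j)"
    using smult_det_one_factorization[OF ac B zero_less_numeral] by blast
  define h where "h = ([1, r0 / l ^ 2, r1 / l ^ 2, r2 / l ^ 2], A, B')"
  have "h \<in> Gcomm 2" using A B' by (simp add: h_def Gcomm_def Gcal_def)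
  moreover have "(\<mu> * l ^ 2) ^ wfac 2 = gdet 2 g"
    by (simp add: g_eq gdet_def wfac_def l)
  moreover have "act 2 g \<phi> = wscale 2 (\<mu> * l ^ 2) (act 2 h \<phi>)" for \<phi>
    using act2_wscale[OF inf \<mu> one_neq_zero l(2) BB', of r0 r1 r2 A \<phi> A] by (simp add: g_eq h_def act_def)
  ultimately show ?thesis by blast
qed

lemma Gcal_3_factorization:
  assumes inf: "infinite (UNIV :: 'a::field set)" and ac: "alg_closed_field_type TYPE('a)"
    and g: "(g :: 'a gelt) \<in> Gcal 3"
  shows "\<exists>h\<in>Gcomm 3. \<exists>e. e ^ wfac 3 = gdet 3 g \<and> (\<forall>\<phi>. act 3 g \<phi> = wscale 3 e (act 3 h \<phi>))"
proof -
  obtain cs A B where g_eq: "g = (cs, A, B)" and cs: "length cs = 1" "cs ! 0 \<noteq> 0"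
    and A: "A = zero_mat 0 0" and B: "B \<in> carrier_mat 3 3" "det B \<noteq> 0"
    using g by (auto simp: Gcal_def)
  obtain \<mu> where \<mu>: "cs = [\<mu>]" "\<mu> \<noteq> 0"
    using cs by (cases cs) auto
  obtain l B' where l: "l ^ 3 = det B" "l \<noteq> 0" and B': "B' \<in> carrier_mat 3 3" "det B' = 1"
    and BB': "\<And>i j. i < 3 \<Longrightarrow> j < 3 \<Longrightarrow> B $$ (i, j) = l * B' $$ (i, j)"
    using smult_det_one_factorization[OF ac B zero_less_numeral] by blast
  have "([1], A, B') \<in> Gcomm 3" using A B' by (simp add: Gcomm_def Gcal_def)
  moreover have "(\<mu> * l ^ 3) ^ wfac 3 = gdet 3 g"
    by (simp add: g_eq \<mu> gdet_def wfac_def l)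
  moreover have "act 3 g \<phi> = wscale 3 (\<mu> * l ^ 3) (act 3 ([1], A, B') \<phi>)" for \<phi>
    using act3_wscale[OF inf BB', of \<mu> A 1 \<phi> A] by (simp add: g_eq \<mu> act_def)
  ultimately show ?thesis by blast
qed

lemma Gcal_4_factorization:
  assumes inf: "infinite (UNIV :: 'a::field set)" and ac: "alg_closed_field_type TYPE('a)"
    and g: "(g :: 'a gelt) \<in> Gcal 4"
  shows "\<exists>h\<in>Gcomm 4. \<exists>e. e ^ wfac 4 = gdet 4 g \<and> (\<forall>\<phi>. act 4 g \<phi> = wscale 4 e (act 4 h \<phi>))"
proof -
  obtain A B where g_eq: "g = ([], A, B)"
    and A: "A \<in> carrier_mat 2 2" "det A \<noteq> 0" and B: "B \<in> carrier_mat 4 4" "det B \<noteq> 0"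
    using g by (auto simp: Gcal_def)
  obtain l A' where l: "l ^ 2 = det A" "l \<noteq> 0" and A': "A' \<in> carrier_mat 2 2" "det A' = 1"
    and AA': "\<And>i j. i < 2 \<Longrightarrow> j < 2 \<Longrightarrow> A $$ (i, j) = l * A' $$ (i, j)"
    using smult_det_one_factorization[OF ac A zero_less_numeral] by blast
  obtain v B' where v: "v ^ 4 = det B" "v \<noteq> 0" and B': "B' \<in> carrier_mat 4 4" "det B' = 1"
    and BB': "\<And>i j. i < 4 \<Longrightarrow> j < 4 \<Longrightarrow> B $$ (i, j) = v * B' $$ (i, j)"
    using smult_det_one_factorization[OF ac B zero_less_numeral] by blast
  have "([], A', B') \<in> Gcomm 4" using A' B' by (simp add: Gcomm_def Gcal_def)
  moreover have "(l * v ^ 2) ^ wfac 4 = gdet 4 g"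
    by (simp add: g_eq gdet_def wfac_def l v power_mult_distrib flip: power_mult)
  moreover have "act 4 g \<phi> = wscale 4 (l * v ^ 2) (act 4 ([], A', B') \<phi>)" for \<phi>
    using act4_wscale[OF inf AA' BB', of "[]" 1 \<phi> "[]"] by (simp add: g_eq act_def)
  ultimately show ?thesis by blast
qed

lemma Gcal_5_factorization:
  assumes inf: "infinite (UNIV :: 'a::field set)" and ac: "alg_closed_field_type TYPE('a)"
    and g: "(g :: 'a gelt) \<in> Gcal 5"
  shows "\<exists>h\<in>Gcomm 5. \<exists>e. e ^ wfac 5 = gdet 5 g \<and> (\<forall>\<phi>. act 5 g \<phi> = wscale 5 e (act 5 h \<phi>))"
proof -
  obtain A B where g_eq: "g = ([], A, B)"
    and A: "A \<in> carrier_mat 5 5" "det A \<noteq> 0" and B: "B \<in> carrier_mat 5 5" "det B \<noteq> 0"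
    using g by (auto simp: Gcal_def)
  obtain l A' where l: "l ^ 5 = det A" "l \<noteq> 0" and A': "A' \<in> carrier_mat 5 5" "det A' = 1"
    and AA': "\<And>i j. i < 5 \<Longrightarrow> j < 5 \<Longrightarrow> A $$ (i, j) = l * A' $$ (i, j)"
    using smult_det_one_factorization[OF ac A zero_less_numeral] by blast
  obtain v B' where v: "v ^ 5 = det B" "v \<noteq> 0" and B': "B' \<in> carrier_mat 5 5" "det B' = 1"
    and BB': "\<And>i j. i < 5 \<Longrightarrow> j < 5 \<Longrightarrow> B $$ (i, j) = v * B' $$ (i, j)"
    using smult_det_one_factorization[OF ac B zero_less_numeral] by blast
  have "([], A', B') \<in> Gcomm 5" using A' B' by (simp add: Gcomm_def Gcal_def)
  moreover have "(l ^ 2 * v) ^ wfac 5 = gdet 5 g"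
  proof -
    have "(l ^ 2 * v) ^ wfac 5 = (l ^ 5) ^ 2 * v ^ 5"
      by (simp add: wfac_def power_mult_distrib flip: power_mult)
    then show ?thesis by (simp add: g_eq gdet_def l v)
  qed
  moreover have "act 5 g \<phi> = wscale 5 (l ^ 2 * v) (act 5 ([], A', B') \<phi>)" for \<phi>
    using act5_wscale[OF inf AA' BB', of "[]" 1 \<phi> "[]"] by (simp add: g_eq act_def)
  ultimately show ?thesis by blast
qed

lemma Gcal_factorization:
  assumes "infinite (UNIV :: 'a::field set)" "alg_closed_field_type TYPE('a)"
    and "n \<in> {1..5}" "(g :: 'a gelt) \<in> Gcal n"
  shows "\<exists>h\<in>Gcomm n. \<exists>e. e ^ wfac n = gdet n g \<and> (\<forall>\<phi>. act n g \<phi> = wscale n e (act n h \<phi>))"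
proof -
  have "n = 1 \<or> n = 2 \<or> n = 3 \<or> n = 4 \<or> n = 5" using assms(3) by auto
  then show ?thesis
    using assms(4) Gcal_1_factorization[OF assms(1)] Gcal_2_factorization[OF assms(1,2)]
      Gcal_3_factorization[OF assms(1,2)] Gcal_4_factorization[OF assms(1,2)]
      Gcal_5_factorization[OF assms(1,2)]
    by (elim disjE) simp_all
qed

lemma Gcomm_1_wscale:
  assumes inf: "infinite (UNIV :: 'a::field set)" and h: "(h :: 'a gelt) \<in> Gcomm 1" and c: "c \<noteq> 0"
  shows "\<exists>h'\<in>Gcomm 1. \<forall>\<phi>. act 1 h' (wscale 1 c \<phi>) = wscale 1 c (act 1 h \<phi>)"
proof -
  obtain r s t A B where h_eq: "h = ([1, r, s, t], A, B)"
    and AB: "A = zero_mat 0 0" "B = zero_mat 0 0"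
    using h length_4_cases by (fastforce simp: Gcomm_def Gcal_def)
  have "([1, r * c ^ 2, s * c, t * c ^ 3], A, B) \<in> Gcomm 1" using AB by (simp add: Gcomm_def Gcal_def)
  moreover have "act 1 ([1, r * c ^ 2, s * c, t * c ^ 3], A, B) (wscale 1 c \<phi>) = wscale 1 c (act 1 h \<phi>)"
    for \<phi>
    using act1_wscale[OF inf one_neq_zero c, of "r * c ^ 2" "s * c" "t * c ^ 3" A B \<phi> A B] c
    by (simp add: h_eq act_def)
  ultimately show ?thesis by blast
qed

lemma Gcomm_2_wscale:
  assumes inf: "infinite (UNIV :: 'a::field set)" and h: "(h :: 'a gelt) \<in> Gcomm 2" and c: "c \<noteq> 0"
  shows "\<exists>h'\<in>Gcomm 2. \<forall>\<phi>. act 2 h' (wscale 2 c \<phi>) = wscale 2 c (act 2 h \<phi>)"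
proof -
  obtain r0 r1 r2 A B where h_eq: "h = ([1, r0, r1, r2], A, B)"
    and AB: "A = zero_mat 0 0" "B \<in> carrier_mat 2 2" "det B = 1"
    using h length_4_cases by (fastforce simp: Gcomm_def Gcal_def)
  have "([1, r0 * c, r1 * c, r2 * c], A, B) \<in> Gcomm 2" using AB by (simp add: Gcomm_def Gcal_def)
  moreover have "act 2 ([1, r0 * c, r1 * c, r2 * c], A, B) (wscale 2 c \<phi>) = wscale 2 c (act 2 h \<phi>)"
    for \<phi>
    using act2_wscale[OF inf one_neq_zero c one_neq_zero, of B B "r0 * c" "r1 * c" "r2 * c" A \<phi> A] c
    by (simp add: h_eq act_def)
  ultimately show ?thesis by blast
qed

lemma Gcomm_wscale:
  assumes inf: "infinite (UNIV :: 'a::field set)" and n: "n \<in> {1..5}"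
    and h: "(h :: 'a gelt) \<in> Gcomm n" and c: "c \<noteq> 0"
  shows "\<exists>h'\<in>Gcomm n. \<forall>\<phi>. act n h' (wscale n c \<phi>) = wscale n c (act n h \<phi>)"
proof -
  obtain cs A B where h_eq: "h = (cs, A, B)" by (cases h) auto
  have "n = 1 \<or> n = 2 \<or> n \<in> {3, 4, 5}" using n by auto
  moreover have "act n h (wscale n c \<phi>) = wscale n c (act n h \<phi>)" if "n \<in> {3, 4, 5}" for \<phi>
  proof -
    have "cs = [1]" if "n = 3"
      using h \<open>n = 3\<close> by (auto simp: h_eq Gcomm_def Gcal_def length_Suc_conv)
    then show ?thesis
      using that act3_wscale[OF inf, of B 1 B 1 A c \<phi> A] act4_wscale[OF inf, of A 1 A B 1 B cs c \<phi> cs]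
        act5_wscale[OF inf, of A 1 A B 1 B cs c \<phi> cs]
      by (auto simp: h_eq act_def)
  qed
  ultimately show ?thesis
    using h Gcomm_1_wscale[OF inf _ c, of h] Gcomm_2_wscale[OF inf _ c, of h] by blast
qed

section \<open>Diagonal tori for n = 4 and n = 5\<close>

lemma det_mat_diag: "det (mat_diag k f) = (\<Prod>i<k. f i)"
proof -
  have "det (mat_diag k f) = prod_list (diag_mat (mat_diag k f))"
    by (rule det_upper_triangular[of _ k]) (auto simp: upper_triangular_def mat_diag_def)
  also have "\<dots> = (\<Prod>i = 0..<k. f i)" by (simp add: prod_list_diag_prod mat_diag_def)
  finally show ?thesis by (simp add: atLeast0LessThan)
qed

lemma mpeval_linsubst_mat_diag:
  assumes "j < k"
  shows "mpeval x (linsubst k (mat_diag k f) j) = f j * x j"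
proof -
  have "mpeval x (linsubst k (mat_diag k f) j) = (\<Sum>i<k. if i = j then f j * x j else 0)"
    unfolding mpeval_linsubst by (intro sum.cong) (use assms in \<open>auto simp: mat_diag_def\<close>)
  then show ?thesis using assms by simp
qed

lemma mons4_distinct: "distinct mons4"
proof -
  have "distinct (map (\<lambda>m. map (Poly_Mapping.lookup m) [0..<4]) mons4)"
    by (simp add: mons4_def upt_rec lookup_add lookup_single)
  then show ?thesis by (simp add: distinct_map)
qed

lemma lookup_quad4: "t < 10 \<Longrightarrow> Poly_Mapping.lookup (quad4 \<phi> a) (mons4 ! t) = \<phi> (10 * a + t)"
proof -
  assume t: "t < 10"
  have len: "length mons4 = 10" by (simp add: mons4_def upt_rec)
  have "Poly_Mapping.lookup (quad4 \<phi> a) (mons4 ! t) =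
      (\<Sum>t'<10. if t' = t then \<phi> (10 * a + t') else 0)"
    unfolding quad4_def lookup_sum lookup_Const_mult
    by (intro sum.cong refl)
      (use t len mons4_distinct in \<open>auto simp: Mon_def lookup_single when_def nth_eq_iff_index_eq\<close>)
  also have "\<dots> = \<phi> (10 * a + t)" using t by simp
  finally show ?thesis .
qed

lemma act4_torus:
  assumes inf: "infinite (UNIV :: 'a::field set)"
  shows "act 4 (cs, mat_diag 2 f, 1\<^sub>m 4) \<phi> = (\<lambda>i. if i < 20 then f (i div 10) * (\<phi> :: nat \<Rightarrow> 'a) i else 0)"
proof -
  have quad4_id: "msubst (linsubst 4 (1\<^sub>m 4)) (quad4 \<phi> b) = quad4 \<phi> b" for b
  proof (rule mpoly_eqI_mpeval[OF inf])
    fix x :: "nat \<Rightarrow> 'a"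
    have "monom_eval (\<lambda>j. mpeval x (linsubst 4 (1\<^sub>m 4) j)) (mons4 ! t) = monom_eval x (mons4 ! t)"
      if "t < 10" for t
      using mons4_quadratic[OF that, THEN conjunct1]
      by (intro monom_eval_cong) (auto simp flip: mat_diag_one simp: mpeval_linsubst_mat_diag)
    then show "mpeval x (msubst (linsubst 4 (1\<^sub>m 4)) (quad4 \<phi> b)) = mpeval x (quad4 \<phi> b)"
      by (simp add: mpeval_msubst mpeval_quad4)
  qed
  have "act 4 (cs, mat_diag 2 f, 1\<^sub>m 4) \<phi> i = f (i div 10) * \<phi> i" if "i < 20" for i
  proof -
    have "act 4 (cs, mat_diag 2 f, 1\<^sub>m 4) \<phi> i =
        (\<Sum>b<2. mat_diag 2 f $$ (i div 10, b) * \<phi> (10 * b + i mod 10))"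
      using that by (simp add: act_def act4_def lookup_sum quad4_id lookup_quad4)
    also have "\<dots> = (\<Sum>b<2. if b = i div 10 then f (i div 10) * \<phi> i else 0)"
      using that by (intro sum.cong) (auto simp: mat_diag_def)
    also have "\<dots> = f (i div 10) * \<phi> i" using that by simp
    finally show ?thesis .
  qed
  then show ?thesis by (auto simp: act_def act4_def)
qed

lemma even_degree_of_Gn_invariant_4:
  fixes F :: "'a::field mpoly"
  assumes inf: "infinite (UNIV :: 'a set)" and "F \<in> KX 4 K" and inv: "Gn_invariant 4 F"
    and hom: "homogeneous 4 d F" and "F \<noteq> 0"
  shows "even d"
proof -
  obtain m where m: "m \<in> Poly_Mapping.keys F" using \<open>F \<noteq> 0\<close> keys_eq_empty by blast
  have vars: "\<And>m i. m \<in> Poly_Mapping.keys F \<Longrightarrow> i \<in> Poly_Mapping.keys m \<Longrightarrow> i < 20"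
    using \<open>F \<in> KX 4 K\<close> by (auto simp: KX_def Ndim_def)
  define u :: "nat \<Rightarrow> nat" where "u s = (if s < 10 then 1 else 0)" for s
  define w :: "nat \<Rightarrow> nat" where "w s = (if 10 \<le> s \<and> s < 20 then 1 else 0)" for s
  have balanced: "(\<Sum>s\<in>Poly_Mapping.keys m. u s * Poly_Mapping.lookup m s) =
      (\<Sum>s\<in>Poly_Mapping.keys m. w s * Poly_Mapping.lookup m s)"
  proof (rule torus_invariant_balanced[OF inf _ m])
    fix t :: 'a and \<phi> assume t: "t \<noteq> 0"
    define g where "g = ([] :: 'a list, mat_diag 2 (\<lambda>i. if i = 0 then t else inverse t), 1\<^sub>m 4 :: 'a mat)"
    have "g \<in> Gcomm 4"
      using t by (simp add: g_def Gcomm_def Gcal_def det_mat_diag lessThan_Suc eval_nat_numeral)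
    have "mpeval (\<lambda>i. t ^ u i * inverse t ^ w i * \<phi> i) F = mpeval (act 4 g \<phi>) F"
      by (rule mpeval_cong) (auto dest!: vars simp: g_def act4_torus[OF inf] u_def w_def)
    also have "\<dots> = mpeval \<phi> F" using inv \<open>g \<in> Gcomm 4\<close> by (simp add: Gn_invariant_def)
    finally show "mpeval (\<lambda>i. t ^ u i * inverse t ^ w i * \<phi> i) F = mpeval \<phi> F" .
  qed
  have "d = (\<Sum>s\<in>Poly_Mapping.keys m. wt 4 s * Poly_Mapping.lookup m s)"
    using hom m by (simp add: homogeneous_def)
  also have "\<dots> = (\<Sum>s\<in>Poly_Mapping.keys m. u s * Poly_Mapping.lookup m s + w s * Poly_Mapping.lookup m s)"
    by (intro sum.cong refl) (auto simp: wt_def u_def w_def dest: vars[OF m])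
  finally show ?thesis using balanced by (simp add: sum.distrib)
qed

lemma alt5_pairs5:
  assumes "p < 10"
  shows "alt5 \<phi> (fst (pairs5 ! p)) (snd (pairs5 ! p)) = (\<Sum>l<5. Const (\<phi> (5 * p + l)) * Var l)"
proof -
  have "distinct pairs5" "length pairs5 = 10" by (simp_all add: pairs5_eq)
  then have same: "pairs5 ! p' = pairs5 ! p \<longleftrightarrow> p' = p" if "p' < 10" for p'
    using that assms by (simp add: nth_eq_iff_index_eq)
  have flip: "pairs5 ! p' \<noteq> (snd (pairs5 ! p), fst (pairs5 ! p))" if "p' < 10" for p'
    using pairs5_nth[OF that] pairs5_nth[OF assms] by (auto simp: prod_eq_iff)
  have "alt5 \<phi> (fst (pairs5 ! p)) (snd (pairs5 ! p)) =
      (\<Sum>p'<10. if p' = p then (\<Sum>l<5. Const (\<phi> (5 * p' + l)) * Var l) else 0)"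
    unfolding alt5_def by (intro sum.cong refl) (simp add: same flip)
  then show ?thesis using assms by simp
qed

lemma lookup_alt5_pairs5:
  assumes "p < 10" and "l < 5"
  shows "Poly_Mapping.lookup (alt5 \<phi> (fst (pairs5 ! p)) (snd (pairs5 ! p))) (Poly_Mapping.single l 1) =
    \<phi> (5 * p + l)"
proof -
  have "Poly_Mapping.single l' (1 :: nat) = Poly_Mapping.single l 1 \<longleftrightarrow> l' = l" for l'
    by (metis lookup_single_eq lookup_single_not_eq one_neq_zero)
  then have "Poly_Mapping.lookup (alt5 \<phi> (fst (pairs5 ! p)) (snd (pairs5 ! p))) (Poly_Mapping.single l 1) =
      (\<Sum>l'<5. if l' = l then \<phi> (5 * p + l') else 0)"
    unfolding alt5_pairs5[OF assms(1)] lookup_sum lookup_Const_mult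
    by (intro sum.cong refl) (simp add: Var_def lookup_single when_def)
  then show ?thesis using assms(2) by simp
qed

lemma act5_torus:
  assumes inf: "infinite (UNIV :: 'a::field set)"
  shows "act 5 (cs, 1\<^sub>m 5, mat_diag 5 f) \<phi> = (\<lambda>s. if s < 50 then f (s mod 5) * (\<phi> :: nat \<Rightarrow> 'a) s else 0)"
proof -
  have one: "(\<Sum>k<5. \<Sum>q<5. Const ((1\<^sub>m 5 :: 'a mat) $$ (i, k) * 1\<^sub>m 5 $$ (j, q)) * alt5 \<phi> k q) =
      alt5 \<phi> i j" if "i < 5" "j < 5" for i j
  proof -
    have "(\<Sum>k<5. \<Sum>q<5. Const ((1\<^sub>m 5 :: 'a mat) $$ (i, k) * 1\<^sub>m 5 $$ (j, q)) * alt5 \<phi> k q) =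
        (\<Sum>k<5. \<Sum>q<5. if q = j then if k = i then alt5 \<phi> i j else 0 else 0)"
      using that by (intro sum.cong refl) (auto simp: Const_def)
    then show ?thesis using that by simp
  qed
  have diag: "msubst (linsubst 5 (mat_diag 5 f)) (alt5 \<phi> i j) = alt5 (\<lambda>s. f (s mod 5) * \<phi> s) i j" for i j
  proof (rule mpoly_eqI_mpeval[OF inf])
    fix x :: "nat \<Rightarrow> 'a"
    show "mpeval x (msubst (linsubst 5 (mat_diag 5 f)) (alt5 \<phi> i j)) =
        mpeval x (alt5 (\<lambda>s. f (s mod 5) * \<phi> s) i j)"
      unfolding mpeval_msubst mpeval_alt5 by (intro sum.cong refl) (simp add: mpeval_linsubst_mat_diag)
  qed
  have "act 5 (cs, 1\<^sub>m 5, mat_diag 5 f) \<phi> s = f (s mod 5) * \<phi> s" if "s < 50" for s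
  proof -
    have p: "s div 5 < 10" and "s mod 5 < 5" using that by auto
    moreover have "fst (pairs5 ! (s div 5)) < 5" "snd (pairs5 ! (s div 5)) < 5"
      using pairs5_nth[OF p] by auto
    ultimately have "act 5 (cs, 1\<^sub>m 5, mat_diag 5 f) \<phi> s = f (s mod 5) * \<phi> (5 * (s div 5) + s mod 5)"
      using that
      by (simp add: act_def act5_def one diag lookup_alt5_pairs5 del: One_nat_def index_one_mat(1))
    then show ?thesis by simp
  qed
  then show ?thesis by (auto simp: act_def act5_def)
qed

definition occurrences5 :: "(nat \<Rightarrow>\<^sub>0 nat) \<Rightarrow> nat \<Rightarrow> nat" where
  "occurrences5 m l = (\<Sum>s\<in>Poly_Mapping.keys m. if s mod 5 = l then Poly_Mapping.lookup m s else 0)"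

lemma occurrences5_balanced:
  fixes F :: "'a::field mpoly"
  assumes inf: "infinite (UNIV :: 'a set)" and "F \<in> KX 5 K" and inv: "Gn_invariant 5 F"
    and m: "m \<in> Poly_Mapping.keys F" and b: "b < 5" "b \<noteq> 0"
  shows "occurrences5 m b = occurrences5 m 0"
proof -
  have vars: "\<And>m i. m \<in> Poly_Mapping.keys F \<Longrightarrow> i \<in> Poly_Mapping.keys m \<Longrightarrow> i < 50"
    using \<open>F \<in> KX 5 K\<close> by (auto simp: KX_def Ndim_def)
  define u :: "nat \<Rightarrow> nat" where "u s = (if s mod 5 = b then 1 else 0)" for s
  define w :: "nat \<Rightarrow> nat" where "w s = (if s mod 5 = 0 then 1 else 0)" for s
  have "(\<Sum>s\<in>Poly_Mapping.keys m. u s * Poly_Mapping.lookup m s) =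
      (\<Sum>s\<in>Poly_Mapping.keys m. w s * Poly_Mapping.lookup m s)"
  proof (rule torus_invariant_balanced[OF inf _ m])
    fix t :: 'a and \<phi> assume t: "t \<noteq> 0"
    define f where "f i = (if i = b then t else if i = 0 then inverse t else 1)" for i
    define g where "g = ([] :: 'a list, 1\<^sub>m 5 :: 'a mat, mat_diag 5 f)"
    have "(\<Prod>i<5. f i) = 1"
      using b t by (auto simp: f_def lessThan_Suc eval_nat_numeral)
    then have "g \<in> Gcomm 5" by (simp add: g_def Gcomm_def Gcal_def det_mat_diag)
    have "mpeval (\<lambda>i. t ^ u i * inverse t ^ w i * \<phi> i) F = mpeval (act 5 g \<phi>) F"
      by (rule mpeval_cong) (use b in \<open>auto dest!: vars simp: g_def act5_torus[OF inf] u_def w_def f_def\<close>)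
    also have "\<dots> = mpeval \<phi> F" using inv \<open>g \<in> Gcomm 5\<close> by (simp add: Gn_invariant_def)
    finally show "mpeval (\<lambda>i. t ^ u i * inverse t ^ w i * \<phi> i) F = mpeval \<phi> F" .
  qed
  moreover have "u s * Poly_Mapping.lookup m s = (if s mod 5 = b then Poly_Mapping.lookup m s else 0)"
    "w s * Poly_Mapping.lookup m s = (if s mod 5 = 0 then Poly_Mapping.lookup m s else 0)" for s
    by (simp_all add: u_def w_def)
  ultimately show ?thesis by (simp add: occurrences5_def)
qed

lemma five_dvd_degree_of_Gn_invariant_5:
  fixes F :: "'a::field mpoly"
  assumes inf: "infinite (UNIV :: 'a set)" and "F \<in> KX 5 K" and "Gn_invariant 5 F"
    and hom: "homogeneous 5 d F" and "F \<noteq> 0"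
  shows "5 dvd d"
proof -
  obtain m where m: "m \<in> Poly_Mapping.keys F" using \<open>F \<noteq> 0\<close> keys_eq_empty by blast
  have "d = (\<Sum>s\<in>Poly_Mapping.keys m. wt 5 s * Poly_Mapping.lookup m s)"
    using hom m by (simp add: homogeneous_def)
  also have "\<dots> = (\<Sum>s\<in>Poly_Mapping.keys m. \<Sum>l<5. if s mod 5 = l then Poly_Mapping.lookup m s else 0)"
    by (intro sum.cong refl) (simp add: wt_def)
  also have "\<dots> = (\<Sum>l<5. occurrences5 m l)"
    unfolding occurrences5_def by (rule sum.swap)
  also have "\<dots> = (\<Sum>l<(5 :: nat). occurrences5 m 0)"
    using occurrences5_balanced[OF assms(1-3) m] by (intro sum.cong refl) (metis lessThan_iff)
  finally show ?thesis by simp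
qed

lemma wfac_pos: "wfac n > 0"
  by (simp add: wfac_def)

lemma wfac_dvd_degree_of_Gn_invariant:
  fixes F :: "'a::field mpoly"
  assumes "infinite (UNIV :: 'a set)" "n \<in> {1..5}"
    and "F \<in> KX n K" "Gn_invariant n F" "homogeneous n d F" "F \<noteq> 0"
  shows "wfac n dvd d"
proof -
  have "n \<in> {1, 2, 3} \<or> n = 4 \<or> n = 5" using assms(2) by auto
  then show ?thesis
    using assms even_degree_of_Gn_invariant_4[OF assms(1)] five_dvd_degree_of_Gn_invariant_5[OF assms(1)]
    by (auto simp: wfac_def)
qed

lemma weight_invariant_if_homogeneous_Gn_invariant:
  fixes F :: "'a::field mpoly"
  assumes inf: "infinite (UNIV :: 'a set)" and ac: "alg_closed_field_type TYPE('a)" and n: "n \<in> {1..5}"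
    and inv: "Gn_invariant n F" and hom: "homogeneous n (wfac n * k) F"
  shows "weight_invariant n k F"
  unfolding weight_invariant_def
proof (intro ballI allI)
  fix g :: "'a gelt" and \<phi> assume g: "g \<in> Gcal n"
  obtain h e where h: "h \<in> Gcomm n" and e: "e ^ wfac n = gdet n g"
    and act: "\<And>\<phi>. act n g \<phi> = wscale n e (act n h \<phi>)"
    using Gcal_factorization[OF inf ac n g] by blast
  have "mpeval (act n g \<phi>) F = e ^ (wfac n * k) * mpeval (act n h \<phi>) F"
    unfolding act by (rule mpeval_wscale[OF hom])
  also have "\<dots> = gdet n g ^ k * mpeval \<phi> F"
    using inv h by (simp add: Gn_invariant_def power_mult e)
  finally show "mpeval (act n g \<phi>) F = gdet n g ^ k * mpeval \<phi> F" .
qed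

lemma mpeval_wscale_eq_sum:
  assumes "\<And>m. m \<in> Poly_Mapping.keys F \<Longrightarrow> wdeg n m \<le> D"
  shows "mpeval (wscale n c \<phi>) F = (\<Sum>d\<le>D. c ^ d * mpeval \<phi> (homogeneous_part n d F))"
proof -
  have parts: "F = (\<Sum>d\<le>D. homogeneous_part n d F)"
    using sum_homogeneous_parts[of 1 F n D] assms by simp
  have "mpeval (wscale n c \<phi>) F = (\<Sum>d\<le>D. mpeval (wscale n c \<phi>) (homogeneous_part n d F))"
    by (subst (1) parts) (rule mpeval_sum)
  then show ?thesis by (simp add: mpeval_wscale[OF homogeneous_homogeneous_part])
qed

(* The scalings normalise G_n and multiply the degree-e part by c ^ e, so comparing the
   coefficients of the powers of c separates the homogeneous parts. *)
lemma Gn_invariant_homogeneous_part: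
  fixes F :: "'a::field mpoly"
  assumes inf: "infinite (UNIV :: 'a set)" and n: "n \<in> {1..5}" and inv: "Gn_invariant n F"
  shows "Gn_invariant n (homogeneous_part n d F)"
  unfolding Gn_invariant_def
proof (intro ballI allI)
  fix h \<phi> assume h: "(h :: 'a gelt) \<in> Gcomm n"
  define D where "D = d + (\<Sum>m\<in>Poly_Mapping.keys F. wdeg n m)"
  have D: "wdeg n m \<le> D" if "m \<in> Poly_Mapping.keys F" for m
    using that member_le_sum[of m "Poly_Mapping.keys F" "wdeg n"] by (simp add: D_def)
  have "\<forall>e\<in>{..D}. mpeval (act n h \<phi>) (homogeneous_part n e F) - mpeval \<phi> (homogeneous_part n e F) = 0"
  proof (rule powers_linear_independent[OF inf, where e = id])
    fix c :: 'a assume c: "c \<noteq> 0"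
    obtain h' where h': "h' \<in> Gcomm n" and comm: "\<And>\<psi>. act n h' (wscale n c \<psi>) = wscale n c (act n h \<psi>)"
      using Gcomm_wscale[OF inf n h c] by blast
    have "mpeval (wscale n c (act n h \<phi>)) F = mpeval (wscale n c \<phi>) F"
      using inv h' by (simp add: Gn_invariant_def flip: comm)
    then show "(\<Sum>e\<in>{..D}. (mpeval (act n h \<phi>) (homogeneous_part n e F) -
        mpeval \<phi> (homogeneous_part n e F)) * c ^ id e) = 0"
      by (simp add: mpeval_wscale_eq_sum[OF D] algebra_simps sum_subtractf)
  qed auto
  then show "mpeval (act n h \<phi>) (homogeneous_part n d F) = mpeval \<phi> (homogeneous_part n d F)"
    by (simp add: D_def)
qed

lemma Gn_invariant_weight_decomposition:
  fixes F :: "'a::field mpoly"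
  assumes inf: "infinite (UNIV :: 'a set)" and ac: "alg_closed_field_type TYPE('a)"
    and K: "subfield K" and n: "n \<in> {1..5}" and F: "F \<in> KX n K" and inv: "Gn_invariant n F"
  shows "\<exists>D Fs. (\<forall>k\<le>D. Fs k \<in> KX n K \<and> weight_invariant n k (Fs k)) \<and> F = (\<Sum>k\<le>D. Fs k)"
proof -
  define D where "D = (\<Sum>m\<in>Poly_Mapping.keys F. wdeg n m)"
  have "wfac n dvd wdeg n m \<and> wdeg n m \<le> D" if "m \<in> Poly_Mapping.keys F" for m
    using that member_le_sum[of m "Poly_Mapping.keys F" "wdeg n"]
      wfac_dvd_degree_of_Gn_invariant[OF inf n homogeneous_part_in_KX[OF K F]
        Gn_invariant_homogeneous_part[OF inf n inv] homogeneous_homogeneous_part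
        homogeneous_part_neq_0[OF that]]
    by (simp add: D_def)
  then have "F = (\<Sum>k\<le>D. homogeneous_part n (wfac n * k) F)"
    by (intro sum_homogeneous_parts wfac_pos)
  moreover have "weight_invariant n k (homogeneous_part n (wfac n * k) F)" for k
    by (intro weight_invariant_if_homogeneous_Gn_invariant[OF inf ac n]
        Gn_invariant_homogeneous_part[OF inf n inv] homogeneous_homogeneous_part)
  ultimately show ?thesis
    using homogeneous_part_in_KX[OF K F]
    by (intro exI[of _ D] exI[of _ "\<lambda>k. homogeneous_part n (wfac n * k) F"]) auto
qed

lemma gdet_surj:
  assumes "n \<in> {1..5}" and "(t :: 'a::field) \<noteq> 0"
  shows "\<exists>g\<in>Gcal n. gdet n g = t"
proof -
  define f where "f i = (if i = 0 then t else 1)" for i :: nat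
  have "(\<Prod>i<4. f i) = t" "(\<Prod>i<5. f i) = t" by (simp_all add: f_def lessThan_Suc eval_nat_numeral)
  moreover have "n = 1 \<or> n = 2 \<or> n = 3 \<or> n = 4 \<or> n = 5" using assms(1) by auto
  ultimately show ?thesis
  proof (elim disjE)
    assume "n = 1"
    then show ?thesis using assms(2)
      by (intro bexI[of _ "([inverse t, 0, 0, 0], zero_mat 0 0, zero_mat 0 0)"]) (simp_all add: Gcal_def gdet_def)
  next
    assume "n = 2"
    then show ?thesis using assms(2)
      by (intro bexI[of _ "([t, 0, 0, 0], zero_mat 0 0, 1\<^sub>m 2)"]) (simp_all add: Gcal_def gdet_def)
  next
    assume "n = 3"
    then show ?thesis using assms(2)
      by (intro bexI[of _ "([t], zero_mat 0 0, 1\<^sub>m 3)"]) (simp_all add: Gcal_def gdet_def)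
  next
    assume "n = 4" "(\<Prod>i<4. f i) = t"
    then show ?thesis using assms(2)
      by (intro bexI[of _ "([], 1\<^sub>m 2, mat_diag 4 f)"]) (simp_all add: Gcal_def gdet_def det_mat_diag)
  next
    assume "n = 5" "(\<Prod>i<5. f i) = t"
    then show ?thesis using assms(2)
      by (intro bexI[of _ "([], 1\<^sub>m 5, mat_diag 5 f)"]) (simp_all add: Gcal_def gdet_def det_mat_diag)
  qed
qed

lemma weight_decomposition_unique:
  fixes Fs :: "nat \<Rightarrow> 'a::field mpoly"
  assumes inf: "infinite (UNIV :: 'a set)" and n: "n \<in> {1..5}"
    and weight: "\<forall>k\<le>D. weight_invariant n k (Fs k)" and sum: "(\<Sum>k\<le>D. Fs k) = 0"
  shows "\<forall>k\<le>D. Fs k = 0"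
proof -
  have "\<forall>k\<in>{..D}. mpeval \<phi> (Fs k) = 0" for \<phi>
  proof (rule powers_linear_independent[OF inf, where e = id])
    fix t :: 'a assume "t \<noteq> 0"
    then obtain g where g: "g \<in> Gcal n" "gdet n g = t" using gdet_surj[OF n] by blast
    have "0 = mpeval (act n g \<phi>) (\<Sum>k\<le>D. Fs k)" using sum by simp
    also have "\<dots> = (\<Sum>k\<le>D. mpeval \<phi> (Fs k) * t ^ k)"
      unfolding mpeval_sum using weight g by (intro sum.cong refl) (simp add: weight_invariant_def)
    finally show "(\<Sum>k\<in>{..D}. mpeval \<phi> (Fs k) * t ^ id k) = 0" by simp
  qed auto
  then show ?thesis by (auto intro: mpoly_eq_0_if_mpeval_eq_0[OF inf])
qed

theorem lemma4p3:
  fixes K :: "'a::field set" and n :: nat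
  assumes "is_algebraic_closure_of K" and "perfect_field K" and "n \<in> {1..5}"
  shows "(\<forall>d (F :: 'a mpoly). F \<in> KX n K \<and> Gn_invariant n F \<and> homogeneous n d F \<longrightarrow>
            (\<exists>k. weight_invariant n k F \<and> (F \<noteq> 0 \<longrightarrow> d = wfac n * k)))
       \<and> (\<forall>F \<in> KX n K. Gn_invariant n F \<longrightarrow>
            (\<exists>D Fs. (\<forall>k\<le>D. Fs k \<in> KX n K \<and> weight_invariant n k (Fs k)) \<and>
                    F = (\<Sum>k\<le>D. Fs k)))
       \<and> (\<forall>D Fs. (\<forall>k\<le>D. Fs k \<in> KX n K \<and> weight_invariant n k (Fs k)) \<and>
                 (\<Sum>k\<le>D. Fs k) = (0 :: 'a mpoly) \<longrightarrow> (\<forall>k\<le>D. Fs k = 0))"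
proof -
  have ac: "alg_closed_field_type TYPE('a)" and K: "subfield K"
    using assms(1) by (auto simp: is_algebraic_closure_of_def)
  note inf = alg_closed_infinite[OF ac] and n = assms(3)
  have "\<exists>k. weight_invariant n k F \<and> (F \<noteq> 0 \<longrightarrow> d = wfac n * k)"
    if F: "F \<in> KX n K" "Gn_invariant n F" "homogeneous n d F" for d and F :: "'a mpoly"
  proof (cases "F = 0")
    case False
    then obtain k where "d = wfac n * k"
      using wfac_dvd_degree_of_Gn_invariant[OF inf n F] by blast
    then show ?thesis using weight_invariant_if_homogeneous_Gn_invariant[OF inf ac n] F by blast
  qed (simp add: weight_invariant_def)
  then show ?thesis
    using Gn_invariant_weight_decomposition[OF inf ac K n] weight_decomposition_unique[OF inf n]
    by blast
qed

end
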